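(* Let $\pi$ be a finitely refining sequence of partitions of $[0,1]$ and $W$ a standard Brownian motion on $[0,1]$. Define $\eta_{m,k}=\frac{(W(t_2)-W(t_1))(t_3-t_2)-(W(t_3)-W(t_2))(t_2-t_1)}{\sqrt{(t_2-t_1)(t_3-t_2)(t_3-t_1)}}$ with $t_j=t^{m,k}_j$. Then almost surely $$W(t)=W(0)+(W(1)-W(0))t+\sum_{m=0}^\infty\sum_{k=0}^{N(\pi^{m+1})-N(\pi^m)-1}\eta_{m,k}e^\pi_{m,k}(t)\quad\text{for all }t\in[0,1],$$ and the random variables $\{\eta_{m,k}\}_{m,k}$ are independent and identically distributed with law $\mathcal N(0,1)$.
   Context: A partition of $[0,1]$ is a finite set $\{0=t_0<t_1<\dots<t_N=1\}$; for a partition $\pi^n=\{0=t^n_0<\dots<t^n_{N(\pi^n)}=1\}$, $N(\pi^n)$ is its number of intervals and $|\pi^n|=\max_i(t^n_{i+1}-t^n_i)$. A sequence $\pi=(\pi^n)_{n\ge0}$ of partitions of $[0,1]$, with the convention $\pi^0=\{0,1\}$, is finitely refining if $\pi^n\subseteq\pi^{n+1}$ for all $n$, $|\pi^n|\to0$, and there is $M<\infty$ such that for every $n$ each interval $[t^n_i,t^n_{i+1}]$ contains at most $M$ points of $\pi^{n+1}$. Haar and Schauder functions of a finitely refining $\pi$: for each level $m\ge0$ and each interval $[u_0,u_r]$ of $\pi^m$, let $u_0<u_1<\dots<u_r$ be the points of $\pi^{m+1}$ lying in $[u_0,u_r]$. For each $i\in\{2,\dots,r\}$ put $t_1=u_0$,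 $t_2=u_{i-1}$, $t_3=u_i$ and define $\psi(s)=\sqrt{\frac{t_3-t_2}{(t_2-t_1)(t_3-t_1)}}$ for $s\in[t_1,t_2)$, $\psi(s)=-\sqrt{\frac{t_2-t_1}{(t_3-t_2)(t_3-t_1)}}$ for $s\in[t_2,t_3)$, $\psi(s)=0$ otherwise, and $e(t)=\int_0^t\psi(s)\,ds$ (a continuous hat function vanishing outside $[t_1,t_3]$, affine on $[t_1,t_2]$ and on $[t_2,t_3]$, maximal at $t_2$). Ranging over all intervals of $\pi^m$ and all such $i$ gives $N(\pi^{m+1})-N(\pi^m)$ functions at level $m$, enumerated in a fixed order as $\psi_{m,k}$, $e^\pi_{m,k}$, $k=0,\dots,N(\pi^{m+1})-N(\pi^m)-1$, with associated points $t^{m,k}_1<t^{m,k}_2<t^{m,k}_3$ (so $[t^{m,k}_1,t^{m,k}_3]$ is the support of $e^\pi_{m,k}$ and $t^{m,k}_2$ its maximum point). *)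

theory Defs
  imports "HOL-Probability.Probability"
begin

definition consecutive :: "real set \<Rightarrow> real \<Rightarrow> real \<Rightarrow> bool" where
  "consecutive P a b \<longleftrightarrow> a \<in> P \<and> b \<in> P \<and> a < b \<and> {a<..<b} \<inter> P = {}"

definition is_partition :: "real set \<Rightarrow> bool" where
  "is_partition P \<longleftrightarrow> finite P \<and> P \<subseteq> {0..1} \<and> 0 \<in> P \<and> 1 \<in> P"

definition mesh :: "real set \<Rightarrow> real" where
  "mesh P = Max {b - a | a b. consecutive P a b}"

definition finitely_refining :: "(nat \<Rightarrow> real set) \<Rightarrow> bool" where
  "finitely_refining \<pi> \<longleftrightarrow>
     \<pi> 0 = {0, 1} \<and>
     (\<forall>n. is_partition (\<pi> n)) \<and>
     (\<forall>n. \<pi> n \<subseteq> \<pi> (Suc n)) \<and>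
     (\<lambda>n. mesh (\<pi> n)) \<longlonglongrightarrow> 0 \<and>
     (\<exists>M::nat. \<forall>n a b. consecutive (\<pi> n) a b \<longrightarrow> card (\<pi> (Suc n) \<inter> {a..b}) \<le> M)"

text \<open>Level-m index set of the Haar/Schauder system: triples (t1,t2,t3) with
  t1 = u0 the left end of an interval [u0,ur] of pi m, t2 = u(i-1), t3 = u(i),
  consecutive points of pi(m+1) inside [u0,ur], 2 \<le> i \<le> r.\<close>
definition schauder_triples :: "(nat \<Rightarrow> real set) \<Rightarrow> nat \<Rightarrow> (real \<times> real \<times> real) set" where
  "schauder_triples \<pi> m = {(t1, t2, t3). \<exists>ur. consecutive (\<pi> m) t1 ur \<and>
       t1 < t2 \<and> t2 < ur \<and> t2 \<in> \<pi> (Suc m) \<and> consecutive (\<pi> (Suc m)) t2 t3 \<and> t3 \<le> ur}"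

definition haar_fun :: "real \<times> real \<times> real \<Rightarrow> real \<Rightarrow> real" where
  "haar_fun tr s = (case tr of (t1, t2, t3) \<Rightarrow>
     if t1 \<le> s \<and> s < t2 then sqrt ((t3 - t2) / ((t2 - t1) * (t3 - t1)))
     else if t2 \<le> s \<and> s < t3 then - sqrt ((t2 - t1) / ((t3 - t2) * (t3 - t1)))
     else 0)"

definition schauder_fun :: "real \<times> real \<times> real \<Rightarrow> real \<Rightarrow> real" where
  "schauder_fun tr t = integral {0..t} (haar_fun tr)"

definition eta :: "(real \<Rightarrow> 'a \<Rightarrow> real) \<Rightarrow> real \<times> real \<times> real \<Rightarrow> 'a \<Rightarrow> real" where
  "eta W tr \<omega> = (case tr of (t1, t2, t3) \<Rightarrow>
     ((W t2 \<omega> - W t1 \<omega>) * (t3 - t2) - (W t3 \<omega> - W t2 \<omega>) * (t2 - t1))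
       / sqrt ((t2 - t1) * (t3 - t2) * (t3 - t1)))"

definition brownian_motion :: "'a measure \<Rightarrow> (real \<Rightarrow> 'a \<Rightarrow> real) \<Rightarrow> bool" where
  "brownian_motion M W \<longleftrightarrow>
     prob_space M \<and>
     (\<forall>t\<in>{0..1}. W t \<in> borel_measurable M) \<and>
     (AE \<omega> in M. W 0 \<omega> = 0) \<and>
     (AE \<omega> in M. continuous_on {0..1} (\<lambda>t. W t \<omega>)) \<and>
     (\<forall>s t. 0 \<le> s \<and> s < t \<and> t \<le> 1 \<longrightarrow>
        distributed M lborel (\<lambda>\<omega>. W t \<omega> - W s \<omega>) (normal_density 0 (sqrt (t - s)))) \<and>
     (\<forall>(n::nat) (ts::nat \<Rightarrow> real). 0 \<le> ts 0 \<and> (\<forall>i<n. ts i < ts (Suc i)) \<and> ts n \<le> 1 \<longrightarrow>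
        prob_space.indep_vars M (\<lambda>_. borel) (\<lambda>i \<omega>. W (ts (Suc i)) \<omega> - W (ts i) \<omega>) {..<n})"

end

theory Submission
  imports Defs
begin

text \<open>
  The coefficient \<open>\<eta>\<close> of a triple \<open>t1 < t2 < t3\<close> is a normalised contrast of the Brownian increments
  over \<open>[t1,t2]\<close> and \<open>[t2,t3]\<close>. Rotating two independent standard normals gives independent
  standard normals, so \<open>\<eta>\<close> is standard normal and independent of the increment over \<open>[t1,t3]\<close>;
  as the path at points outside \<open>(t1,t3)\<close> is a function of that increment and of increments
  over disjoint intervals, \<open>\<eta>\<close> is independent of it. In a finite family of triples, the
  triple of highest level with leftmost right end sees all points of the other triples
  outside its interval, and peeling it off repeatedly yields independence of the family.

  Multiplied by the Schauder function, \<open>\<eta>\<close> is exactly the change of the piecewise linear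
  interpolant of the path caused by inserting the knot \<open>t2\<close>. Hence level \<open>m\<close> of the series
  sums to the difference of the interpolants on \<open>\<pi> (m+1)\<close> and \<open>\<pi> m\<close>, the series telescopes,
  and the interpolants converge to the continuous path because the mesh tends to \<open>0\<close>.
\<close>

section \<open>Independence criteria\<close>

lemma (in prob_space) indep_var_sym:
  assumes "indep_var Ma A Mb B"
  shows "indep_var Mb B Ma A"
proof -
  have "prob (a \<inter> b) = prob a * prob b" if "prob (b \<inter> a) = prob b * prob a" for a b
    using that by (simp add: Int_commute mult.commute)
  then show ?thesis using assms unfolding indep_var_eq indep_sets2_eq by blast
qed

lemma (in prob_space) indep_var_lborel_iff: "indep_var lborel X lborel Y \<longleftrightarrow> indep_var borel X borel Y"
  unfolding indep_var_def indep_vars_def2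
  by (intro conj_cong indep_sets_cong refl ball_cong) (auto split: bool.split)

(* Stated with probabilities since \<open>indep_var\<close> needs both variables to take values in one type.
   The product rule holds on rectangles by the two hypotheses and extends by the \<pi>-\<lambda> theorem. *)
lemma (in prob_space) indep_prob_pair_extend:
  assumes XY: "indep_var MX X MY Y"
    and fg: "indep_var N1 (\<lambda>\<omega>. f (X \<omega>)) N2 (\<lambda>\<omega>. g (X \<omega>))"
    and f: "f \<in> measurable MX N1" and g: "g \<in> measurable MX N2"
    and A: "A \<in> sets N1" and C: "C \<in> sets (N2 \<Otimes>\<^sub>M MY)"
  shows "prob ((\<lambda>\<omega>. f (X \<omega>)) -` A \<inter> (\<lambda>\<omega>. (g (X \<omega>), Y \<omega>)) -` C \<inter> space M)
       = prob ((\<lambda>\<omega>. f (X \<omega>)) -` A \<inter> space M) * prob ((\<lambda>\<omega>. (g (X \<omega>), Y \<omega>)) -` C \<inter> space M)"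
proof -
  define U where "U = (\<lambda>\<omega>. f (X \<omega>))"
  define Z where "Z = (\<lambda>\<omega>. (g (X \<omega>), Y \<omega>))"
  have X: "X \<in> measurable M MX" and Y: "Y \<in> measurable M MY"
    using XY by (simp_all add: indep_var_rv1 indep_var_rv2)
  have U: "U \<in> measurable M N1" unfolding U_def using f X by measurable
  have gX: "(\<lambda>\<omega>. g (X \<omega>)) \<in> measurable M N2" using g X by measurable
  have Z: "Z \<in> measurable M (N2 \<Otimes>\<^sub>M MY)" unfolding Z_def using gX Y by measurable
  have Xsp: "X \<omega> \<in> space MX" if "\<omega> \<in> space M" for \<omega> using measurable_space[OF X that] .
  let ?R = "{a \<times> b | a b. a \<in> sets N2 \<and> b \<in> sets MY}"
  let ?F = "{U -` A \<inter> space M | A. A \<in> sets N1}"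
  let ?G = "{Z -` R \<inter> space M | R. R \<in> ?R}"
  have rectangles: "prob (U -` A \<inter> space M \<inter> (Z -` (a \<times> b) \<inter> space M))
      = prob (U -` A \<inter> space M) * prob (Z -` (a \<times> b) \<inter> space M)"
    if A: "A \<in> sets N1" and a: "a \<in> sets N2" and b: "b \<in> sets MY" for A a b
  proof -
    have Aa: "f -` A \<inter> g -` a \<inter> space MX \<in> sets MX"
      using sets.Int[OF measurable_sets[OF f A] measurable_sets[OF g a]]
      by (simp add: Int_assoc Int_left_commute)
    have ga: "g -` a \<inter> space MX \<in> sets MX" using g a by (rule measurable_sets)
    have p1: "prob (U -` A \<inter> space M \<inter> (Z -` (a \<times> b) \<inter> space M))
        = prob (X -` (f -` A \<inter> g -` a \<inter> space MX) \<inter> space M) * prob (Y -` b \<inter> space M)"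
      using indep_varD[OF XY Aa b] Xsp unfolding U_def Z_def
      by (simp add: vimage_def Int_def conj_ac cong: conj_cong)
    have p2: "prob (X -` (f -` A \<inter> g -` a \<inter> space MX) \<inter> space M)
        = prob (U -` A \<inter> space M) * prob ((\<lambda>\<omega>. g (X \<omega>)) -` a \<inter> space M)"
      using indep_varD[OF fg A a] Xsp unfolding U_def
      by (simp add: vimage_def Int_def conj_ac cong: conj_cong)
    have p3: "prob (Z -` (a \<times> b) \<inter> space M)
        = prob ((\<lambda>\<omega>. g (X \<omega>)) -` a \<inter> space M) * prob (Y -` b \<inter> space M)"
      using indep_varD[OF XY ga b] Xsp unfolding Z_def
      by (simp add: vimage_def Int_def conj_ac cong: conj_cong)
    show ?thesis unfolding p1 p2 p3 by (simp add: mult.assoc)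
  qed
  have "indep_set ?F ?G"
    unfolding indep_sets2_eq
    using measurable_sets[OF U] measurable_sets[OF Z] rectangles by auto
  then have I: "indep_set (sigma_sets (space M) ?F) (sigma_sets (space M) ?G)"
  proof (rule indep_set_sigma_sets)
    show "Int_stable ?F"
    proof (unfold Int_stable_def, clarify)
      fix A B assume "A \<in> sets N1" "B \<in> sets N1"
      then show "\<exists>C. U -` A \<inter> space M \<inter> (U -` B \<inter> space M) = U -` C \<inter> space M \<and> C \<in> sets N1"
        by (intro exI[of _ "A \<inter> B"]) auto
    qed
    show "Int_stable ?G"
    proof (unfold Int_stable_def, clarify)
      fix a b a' b' assume "a \<in> sets N2" "b \<in> sets MY" "a' \<in> sets N2" "b' \<in> sets MY"
      then show "\<exists>R. Z -` (a \<times> b) \<inter> space M \<inter> (Z -` (a' \<times> b') \<inter> space M) = Z -` R \<inter> space M \<and> R \<in> ?R"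
        by (intro exI[of _ "(a \<inter> a') \<times> (b \<inter> b')"]) auto
    qed
  qed
  have "Z -` C \<inter> space M \<in> sigma_sets (space M) ?G"
  proof -
    have Zsp: "Z \<in> space M \<rightarrow> space N2 \<times> space MY" using measurable_space[OF Z] by (auto simp: space_pair_measure)
    have "{Z -` C \<inter> space M | C. C \<in> sets (N2 \<Otimes>\<^sub>M MY)} = sigma_sets (space M) ?G"
      unfolding sets_pair_measure by (rule sigma_sets_vimage_commute[OF Zsp])
    then show ?thesis using C by blast
  qed
  moreover have "U -` A \<inter> space M \<in> sigma_sets (space M) ?F" using A by blast
  ultimately have "prob (U -` A \<inter> space M \<inter> (Z -` C \<inter> space M)) = prob (U -` A \<inter> space M) * prob (Z -` C \<inter> space M)"
    using indep_setD[OF I] by blast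
  moreover have "U -` A \<inter> space M \<inter> (Z -` C \<inter> space M) = U -` A \<inter> Z -` C \<inter> space M" by blast
  ultimately show ?thesis unfolding U_def Z_def by simp
qed

lemma (in prob_space) indep_vars_by_peeling:
  fixes X :: "'i \<Rightarrow> 'a \<Rightarrow> 'b"
  assumes "finite J"
    and rv: "\<And>i. i \<in> J \<Longrightarrow> random_variable (M' i) (X i)"
    and peel: "\<And>K. K \<subseteq> J \<Longrightarrow> K \<noteq> {} \<Longrightarrow> \<exists>j\<in>K. \<exists>(N::'c measure) Y. Y \<in> measurable M N \<and>
      (\<forall>i\<in>K - {j}. \<exists>h \<in> measurable N (M' i). \<forall>\<omega>\<in>space M. X i \<omega> = h (Y \<omega>)) \<and>
      (\<forall>A\<in>sets (M' j). \<forall>C\<in>sets N.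
         prob (X j -` A \<inter> Y -` C \<inter> space M) = prob (X j -` A \<inter> space M) * prob (Y -` C \<inter> space M))"
  shows "indep_vars M' X J"
proof -
  have char: "indep_vars M' X L \<longleftrightarrow> (\<forall>A\<in>(\<Pi> i\<in>L. sets (M' i)).
      prob (\<Inter>i\<in>L. X i -` A i \<inter> space M) = (\<Prod>i\<in>L. prob (X i -` A i \<inter> space M)))"
    if "L \<subseteq> J" "L \<noteq> {}" for L
    using that finite_subset[OF that(1) \<open>finite J\<close>] rv
    by (intro indep_vars_finite) (auto simp: Int_stable_def sets.space_closed sets.sigma_sets_eq)
  have "indep_vars M' X K" if "K \<subseteq> J" for K
    using finite_subset[OF that \<open>finite J\<close>] that
  proof (induction K rule: finite_psubset_induct)
    case (psubset K)
    show ?case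
    proof (cases "K = {}")
      case True
      then show ?thesis unfolding indep_vars_def2 indep_sets_def by auto
    next
      case False
      obtain j and N :: "'c measure" and Y where j: "j \<in> K" and Y: "Y \<in> measurable M N"
        and funs: "\<forall>i\<in>K - {j}. \<exists>h \<in> measurable N (M' i). \<forall>\<omega>\<in>space M. X i \<omega> = h (Y \<omega>)"
        and indep: "\<forall>A\<in>sets (M' j). \<forall>C\<in>sets N.
          prob (X j -` A \<inter> Y -` C \<inter> space M) = prob (X j -` A \<inter> space M) * prob (Y -` C \<inter> space M)"
        using peel[OF psubset.prems False] by blast
      from funs have "\<forall>i\<in>K - {j}. \<exists>h. h \<in> measurable N (M' i) \<and> (\<forall>\<omega>\<in>space M. X i \<omega> = h (Y \<omega>))"
        by blast
      from bchoice[OF this] obtain h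
        where "\<forall>i\<in>K - {j}. h i \<in> measurable N (M' i) \<and> (\<forall>\<omega>\<in>space M. X i \<omega> = h i (Y \<omega>))"
        by blast
      then have hm: "\<And>i. i \<in> K - {j} \<Longrightarrow> h i \<in> measurable N (M' i)"
        and hX: "\<And>i \<omega>. i \<in> K - {j} \<Longrightarrow> \<omega> \<in> space M \<Longrightarrow> X i \<omega> = h i (Y \<omega>)"
        by blast+
      have "\<forall>A\<in>(\<Pi> i\<in>K. sets (M' i)).
          prob (\<Inter>i\<in>K. X i -` A i \<inter> space M) = (\<Prod>i\<in>K. prob (X i -` A i \<inter> space M))"
      proof (cases "K = {j}")
        case True
        then show ?thesis by simp
      next
        case False
        then have K': "K - {j} \<subseteq> J" "K - {j} \<noteq> {}" using j psubset.prems by auto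
        have IH: "indep_vars M' X (K - {j})" by (rule psubset.IH) (use j K' in auto)
        show ?thesis
        proof
          fix A assume A: "A \<in> (\<Pi> i\<in>K. sets (M' i))"
          define C where "C = {y \<in> space N. \<forall>i\<in>K - {j}. h i y \<in> A i}"
          have C: "C \<in> sets N" unfolding C_def
          proof (rule sets.sets_Collect_finite_All)
            fix i assume "i \<in> K - {j}"
            then have "h i -` A i \<inter> space N \<in> sets N" using hm A by (auto intro: measurable_sets)
            then show "{y \<in> space N. h i y \<in> A i} \<in> sets N" by (simp add: Int_def vimage_def conj_commute)
          qed (use psubset.hyps in auto)
          have rest: "Y -` C \<inter> space M = (\<Inter>i\<in>K - {j}. X i -` A i \<inter> space M)"
          proof (rule set_eqI)
            fix \<omega>
            show "\<omega> \<in> Y -` C \<inter> space M \<longleftrightarrow> \<omega> \<in> (\<Inter>i\<in>K - {j}. X i -` A i \<inter> space M)"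
            proof -
              have "\<omega> \<in> space M \<Longrightarrow> (\<forall>i\<in>K - {j}. h i (Y \<omega>) \<in> A i) \<longleftrightarrow> (\<forall>i\<in>K - {j}. X i \<omega> \<in> A i)"
                by (simp add: hX)
              then show ?thesis using measurable_space[OF Y, of \<omega>] K'(2) unfolding C_def by auto
            qed
          qed
          have "(\<Inter>i\<in>K. X i -` A i \<inter> space M) = X j -` A j \<inter> space M \<inter> (\<Inter>i\<in>K - {j}. X i -` A i \<inter> space M)"
            by (subst (1) insert_Diff[OF j, symmetric]) (rule INT_insert)
          also have "\<dots> = X j -` A j \<inter> Y -` C \<inter> space M"
            unfolding rest[symmetric] by blast
          finally have "prob (\<Inter>i\<in>K. X i -` A i \<inter> space M) = prob (X j -` A j \<inter> space M) * prob (Y -` C \<inter> space M)"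
            using indep C A j by (simp add: Pi_iff)
          also have "prob (Y -` C \<inter> space M) = (\<Prod>i\<in>K - {j}. prob (X i -` A i \<inter> space M))"
            using IH[unfolded char[OF K']] A unfolding rest by (simp add: Pi_iff)
          also have "prob (X j -` A j \<inter> space M) * \<dots> = (\<Prod>i\<in>K. prob (X i -` A i \<inter> space M))"
            by (rule prod.remove[OF psubset.hyps j, symmetric])
          finally show "prob (\<Inter>i\<in>K. X i -` A i \<inter> space M) = (\<Prod>i\<in>K. prob (X i -` A i \<inter> space M))" .
        qed
      qed
      then show ?thesis using char[OF psubset.prems] j by blast
    qed
  qed
  then show ?thesis by simp
qed

lemma (in prob_space) indep_vars_finite_index_sets:
  assumes "\<And>i. i \<in> I \<Longrightarrow> random_variable (M' i) (X i)"
    and "\<And>J. J \<subseteq> I \<Longrightarrow> finite J \<Longrightarrow> indep_vars M' X J"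
  shows "indep_vars M' X I"
  unfolding indep_vars_def2
proof (intro conjI ballI assms(1))
  show "indep_sets (\<lambda>i. {X i -` A \<inter> space M |A. A \<in> sets (M' i)}) I"
    by (subst indep_sets_finite_index_sets) (use assms(2) in \<open>auto simp: indep_vars_def2\<close>)
qed

section \<open>Rotations of standard Gaussian pairs\<close>

lemma nn_integral_lborel_pair_reflect:
  fixes c s :: real and g :: "real \<times> real \<Rightarrow> ennreal"
  assumes cs: "c\<^sup>2 + s\<^sup>2 = 1" and s: "s \<noteq> 0" and g[measurable]: "g \<in> borel_measurable borel"
  shows "(\<integral>\<^sup>+x. \<integral>\<^sup>+y. g (c * x + s * y, s * x - c * y) \<partial>lborel \<partial>lborel)
       = (\<integral>\<^sup>+u. \<integral>\<^sup>+v. g (u, v) \<partial>lborel \<partial>lborel)"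
proof -
  have inner: "(\<integral>\<^sup>+y. g (c * x + s * y, s * x - c * y) \<partial>lborel)
      = ennreal (1 / \<bar>s\<bar>) * (\<integral>\<^sup>+u. g (u, (x - c * u) / s) \<partial>lborel)" for x
  proof -
    have [simp]: "(x - c * (c * x + s * y)) / s = s * x - c * y" for y
    proof -
      have "x - c * (c * x + s * y) = x * (c\<^sup>2 + s\<^sup>2) - c * (c * x + s * y)" using cs by simp
      also have "\<dots> = s * (s * x - c * y)" by (simp add: algebra_simps power2_eq_square)
      finally show ?thesis using s by simp
    qed
    have "(\<integral>\<^sup>+u. g (u, (x - c * u) / s) \<partial>lborel)
        = \<bar>s\<bar> * (\<integral>\<^sup>+y. g (c * x + s * y, s * x - c * y) \<partial>lborel)"
      using nn_integral_real_affine[of "\<lambda>u. g (u, (x - c * u) / s)" s "c * x"] s by simp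
    moreover have "ennreal (1 / \<bar>s\<bar>) * ennreal \<bar>s\<bar> = 1"
      using s by (simp add: ennreal_mult'[symmetric])
    ultimately show ?thesis by (simp add: mult.assoc[symmetric])
  qed
  have outer: "(\<integral>\<^sup>+x. g (u, (x - c * u) / s) \<partial>lborel) = ennreal \<bar>s\<bar> * (\<integral>\<^sup>+v. g (u, v) \<partial>lborel)" for u
    using nn_integral_real_affine[of "\<lambda>x. g (u, (x - c * u) / s)" s "c * u"] s by simp
  have "(\<integral>\<^sup>+x. \<integral>\<^sup>+y. g (c * x + s * y, s * x - c * y) \<partial>lborel \<partial>lborel)
      = ennreal (1 / \<bar>s\<bar>) * (\<integral>\<^sup>+x. \<integral>\<^sup>+u. g (u, (x - c * u) / s) \<partial>lborel \<partial>lborel)"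
    unfolding inner by (rule nn_integral_cmult) measurable
  also have "(\<integral>\<^sup>+x. \<integral>\<^sup>+u. g (u, (x - c * u) / s) \<partial>lborel \<partial>lborel)
      = (\<integral>\<^sup>+u. \<integral>\<^sup>+x. g (u, (x - c * u) / s) \<partial>lborel \<partial>lborel)"
    by (rule lborel_pair.Fubini') measurable
  also have "\<dots> = ennreal \<bar>s\<bar> * (\<integral>\<^sup>+u. \<integral>\<^sup>+v. g (u, v) \<partial>lborel \<partial>lborel)"
    unfolding outer by (rule nn_integral_cmult) measurable
  finally show ?thesis using s
    by (simp add: mult.assoc[symmetric] ennreal_mult'[symmetric])
qed

lemma std_normal_density_reflect:
  fixes c s x y :: real
  assumes "c\<^sup>2 + s\<^sup>2 = 1"
  shows "std_normal_density (c * x + s * y) * std_normal_density (s * x - c * y)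
       = std_normal_density x * std_normal_density y"
proof -
  have "(c * x + s * y)\<^sup>2 + (s * x - c * y)\<^sup>2 = (c\<^sup>2 + s\<^sup>2) * (x\<^sup>2 + y\<^sup>2)"
    by (simp add: algebra_simps power2_eq_square)
  then have "(c * x + s * y)\<^sup>2 + (s * x - c * y)\<^sup>2 = x\<^sup>2 + y\<^sup>2" using assms by simp
  then show ?thesis
    unfolding std_normal_density_def
    by (simp add: exp_add[symmetric] add_divide_distrib[symmetric] diff_divide_distrib[symmetric])
qed

lemma distr_std_normal_pair_reflect:
  fixes c s :: real
  assumes cs: "c\<^sup>2 + s\<^sup>2 = 1" and s: "s \<noteq> 0"
  defines "\<Phi> \<equiv> \<lambda>(x::real, y::real). ennreal (std_normal_density x * std_normal_density y)"
  shows "distr (density (lborel \<Otimes>\<^sub>M lborel) \<Phi>) (lborel \<Otimes>\<^sub>M lborel) (\<lambda>(x, y). (c * x + s * y, s * x - c * y))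
       = density (lborel \<Otimes>\<^sub>M lborel) \<Phi>"
    (is "distr ?D _ ?R = _")
proof (rule measure_eqI)
  fix A assume "A \<in> sets (distr ?D (lborel \<Otimes>\<^sub>M lborel) ?R)"
  then have A: "A \<in> sets (lborel \<Otimes>\<^sub>M lborel)" and [measurable]: "A \<in> sets borel"
    by (simp_all add: borel_prod[symmetric])
  have \<Phi>m: "\<Phi> \<in> borel_measurable (lborel \<Otimes>\<^sub>M lborel)" unfolding \<Phi>_def by measurable
  then have [measurable]: "\<Phi> \<in> borel_measurable borel" by (simp add: borel_prod[symmetric])
  have R[measurable]: "?R \<in> measurable (lborel \<Otimes>\<^sub>M lborel) (lborel \<Otimes>\<^sub>M lborel)" by measurable
  let ?g = "\<lambda>z. \<Phi> z * indicator A z"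
  have "emeasure (distr ?D (lborel \<Otimes>\<^sub>M lborel) ?R) A = emeasure ?D (?R -` A \<inter> space ?D)"
    using R A by (intro emeasure_distr) simp_all
  also have "\<dots> = (\<integral>\<^sup>+z. \<Phi> z * indicator A (?R z) \<partial>(lborel \<Otimes>\<^sub>M lborel))"
    using \<Phi>m measurable_sets[OF R A]
    by (subst emeasure_density) (auto simp: space_pair_measure intro!: nn_integral_cong split: split_indicator)
  also have "\<dots> = (\<integral>\<^sup>+x. \<integral>\<^sup>+y. ?g (c * x + s * y, s * x - c * y) \<partial>lborel \<partial>lborel)"
    by (subst lborel.nn_integral_fst[symmetric])
      (auto simp: \<Phi>_def std_normal_density_reflect[OF cs] intro!: nn_integral_cong)
  also have "\<dots> = (\<integral>\<^sup>+u. \<integral>\<^sup>+v. ?g (u, v) \<partial>lborel \<partial>lborel)"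
    by (rule nn_integral_lborel_pair_reflect[OF cs s]) measurable
  also have "\<dots> = emeasure ?D A"
    using A \<Phi>m by (subst lborel.nn_integral_fst) (simp_all add: emeasure_density)
  finally show "emeasure (distr ?D (lborel \<Otimes>\<^sub>M lborel) ?R) A = emeasure ?D A" .
qed simp

lemma distr_lborel_eq_borel: "distr M lborel f = distr M borel f"
  by (simp add: distr_def)

lemma distr_lborel_pair_eq_borel_pair:
  "distr M (lborel \<Otimes>\<^sub>M lborel) f = distr M (borel \<Otimes>\<^sub>M borel) f"
  unfolding distr_def by (simp add: space_pair_measure)

lemma distr_pair_eq_imp_marginals_eq:
  assumes eq: "distr M (N1 \<Otimes>\<^sub>M N2) (\<lambda>\<omega>. (A \<omega>, B \<omega>)) = distr M (N1 \<Otimes>\<^sub>M N2) (\<lambda>\<omega>. (C \<omega>, D \<omega>))"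
    and [measurable]: "A \<in> measurable M N1" "B \<in> measurable M N2" "C \<in> measurable M N1" "D \<in> measurable M N2"
  shows "distr M N1 A = distr M N1 C" and "distr M N2 B = distr M N2 D"
proof -
  have "distr M N1 A = distr (distr M (N1 \<Otimes>\<^sub>M N2) (\<lambda>\<omega>. (A \<omega>, B \<omega>))) N1 fst"
    "distr M N1 C = distr (distr M (N1 \<Otimes>\<^sub>M N2) (\<lambda>\<omega>. (C \<omega>, D \<omega>))) N1 fst"
    "distr M N2 B = distr (distr M (N1 \<Otimes>\<^sub>M N2) (\<lambda>\<omega>. (A \<omega>, B \<omega>))) N2 snd"
    "distr M N2 D = distr (distr M (N1 \<Otimes>\<^sub>M N2) (\<lambda>\<omega>. (C \<omega>, D \<omega>))) N2 snd"
    by (subst distr_distr; simp add: comp_def)+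
  then show "distr M N1 A = distr M N1 C" and "distr M N2 B = distr M N2 D"
    unfolding eq by simp_all
qed

lemma (in prob_space) distr_indep_std_normal_reflect:
  fixes X Y :: "'a \<Rightarrow> real"
  assumes X: "distributed M lborel X std_normal_density" and Y: "distributed M lborel Y std_normal_density"
    and XY: "indep_var borel X borel Y" and cs: "c\<^sup>2 + s\<^sup>2 = 1" and s: "s \<noteq> 0"
  shows "distr M (lborel \<Otimes>\<^sub>M lborel) (\<lambda>\<omega>. (c * X \<omega> + s * Y \<omega>, s * X \<omega> - c * Y \<omega>))
       = distr M (lborel \<Otimes>\<^sub>M lborel) (\<lambda>\<omega>. (X \<omega>, Y \<omega>))"
proof -
  let ?R = "\<lambda>(x::real, y::real). (c * x + s * y, s * x - c * y)"
  have [measurable]: "X \<in> borel_measurable M" "Y \<in> borel_measurable M"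
    using distributed_measurable[OF X] distributed_measurable[OF Y] by simp_all
  have "distributed M (lborel \<Otimes>\<^sub>M lborel) (\<lambda>\<omega>. (X \<omega>, Y \<omega>))
      (\<lambda>(x, y). ennreal (std_normal_density x) * ennreal (std_normal_density y))"
    using XY by (intro distributed_joint_indep[OF _ _ X Y])
      (simp_all add: indep_var_lborel_iff lborel.sigma_finite_measure_axioms)
  then have joint: "distr M (lborel \<Otimes>\<^sub>M lborel) (\<lambda>\<omega>. (X \<omega>, Y \<omega>))
      = density (lborel \<Otimes>\<^sub>M lborel) (\<lambda>(x, y). ennreal (std_normal_density x * std_normal_density y))"
    by (auto dest!: distributed_distr_eq_density simp: ennreal_mult case_prod_beta)
  have "distr M (lborel \<Otimes>\<^sub>M lborel) (\<lambda>\<omega>. (c * X \<omega> + s * Y \<omega>, s * X \<omega> - c * Y \<omega>))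
      = distr (distr M (lborel \<Otimes>\<^sub>M lborel) (\<lambda>\<omega>. (X \<omega>, Y \<omega>))) (lborel \<Otimes>\<^sub>M lborel) ?R"
    by (subst distr_distr) (simp_all add: comp_def)
  also have "\<dots> = distr M (lborel \<Otimes>\<^sub>M lborel) (\<lambda>\<omega>. (X \<omega>, Y \<omega>))"
    unfolding joint by (rule distr_std_normal_pair_reflect[OF cs s])
  finally show ?thesis .
qed

lemma (in prob_space) indep_std_normal_reflect:
  fixes X Y :: "'a \<Rightarrow> real"
  assumes X: "distributed M lborel X std_normal_density" and Y: "distributed M lborel Y std_normal_density"
    and XY: "indep_var borel X borel Y" and cs: "c\<^sup>2 + s\<^sup>2 = 1" and s: "s \<noteq> 0"
  shows "indep_var borel (\<lambda>\<omega>. c * X \<omega> + s * Y \<omega>) borel (\<lambda>\<omega>. s * X \<omega> - c * Y \<omega>)"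
    and "distributed M lborel (\<lambda>\<omega>. s * X \<omega> - c * Y \<omega>) std_normal_density"
proof -
  have [measurable]: "X \<in> borel_measurable M" "Y \<in> borel_measurable M"
    using distributed_measurable[OF X] distributed_measurable[OF Y] by simp_all
  note joint = distr_indep_std_normal_reflect[OF X Y XY cs s]
  have U: "distr M lborel (\<lambda>\<omega>. c * X \<omega> + s * Y \<omega>) = distr M lborel X"
    and V: "distr M lborel (\<lambda>\<omega>. s * X \<omega> - c * Y \<omega>) = distr M lborel Y"
    by (rule distr_pair_eq_imp_marginals_eq[OF joint]; simp)+
  show "distributed M lborel (\<lambda>\<omega>. s * X \<omega> - c * Y \<omega>) std_normal_density"
    using V distributed_distr_eq_density[OF Y] by (simp add: distributed_def)
  have "distr M borel X \<Otimes>\<^sub>M distr M borel Y = distr M (borel \<Otimes>\<^sub>M borel) (\<lambda>\<omega>. (X \<omega>, Y \<omega>))"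
    using XY indep_var_distribution_eq by blast
  then show "indep_var borel (\<lambda>\<omega>. c * X \<omega> + s * Y \<omega>) borel (\<lambda>\<omega>. s * X \<omega> - c * Y \<omega>)"
    unfolding indep_var_distribution_eq
    using joint U V by (simp add: distr_lborel_eq_borel distr_lborel_pair_eq_borel_pair)
qed

lemma (in prob_space) normal_pair_decorrelation:
  fixes S D :: "'a \<Rightarrow> real" and a b :: real
  assumes a: "0 < a" and b: "0 < b"
    and S: "distributed M lborel S (normal_density 0 (sqrt a))"
    and D: "distributed M lborel D (normal_density 0 (sqrt b))"
    and SD: "indep_var borel S borel D"
  shows "indep_var borel (\<lambda>\<omega>. (S \<omega> * b - D \<omega> * a) / sqrt (a * b * (a + b))) borel (\<lambda>\<omega>. S \<omega> + D \<omega>)"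
    and "distributed M lborel (\<lambda>\<omega>. (S \<omega> * b - D \<omega> * a) / sqrt (a * b * (a + b))) std_normal_density"
proof -
  \<comment> \<open>Rotate the normalised pair by the angle with cosine \<open>sqrt (a / (a + b))\<close>.\<close>
  define X where "X = (\<lambda>\<omega>. S \<omega> / sqrt a)"
  define Y where "Y = (\<lambda>\<omega>. D \<omega> / sqrt b)"
  define c where "c = sqrt a / sqrt (a + b)"
  define s where "s = sqrt b / sqrt (a + b)"
  have X: "distributed M lborel X std_normal_density"
    using normal_standard_normal_convert[of "sqrt a" S 0] S a unfolding X_def by simp
  have Y: "distributed M lborel Y std_normal_density"
    using normal_standard_normal_convert[of "sqrt b" D 0] D b unfolding Y_def by simp
  have XY: "indep_var borel X borel Y"
    using indep_var_compose[OF SD, of "\<lambda>x. x / sqrt a" borel "\<lambda>x. x / sqrt b" borel]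
    unfolding X_def Y_def by (simp add: comp_def)
  have cs: "c\<^sup>2 + s\<^sup>2 = 1"
  proof -
    have "c\<^sup>2 + s\<^sup>2 = a / (a + b) + b / (a + b)" using a b unfolding c_def s_def by (simp add: power_divide)
    also have "\<dots> = 1" using a b by (simp add: add_divide_distrib[symmetric])
    finally show ?thesis .
  qed
  have s0: "s \<noteq> 0" using a b unfolding s_def by simp
  have contrast: "(\<lambda>\<omega>. s * X \<omega> - c * Y \<omega>) = (\<lambda>\<omega>. (S \<omega> * b - D \<omega> * a) / sqrt (a * b * (a + b)))"
  proof
    fix \<omega>
    have "sqrt a > 0" "sqrt b > 0" "sqrt (a + b) > 0" using a b by simp_all
    then have "s * X \<omega> - c * Y \<omega>
        = (S \<omega> * (sqrt b * sqrt b) - D \<omega> * (sqrt a * sqrt a)) / (sqrt a * sqrt b * sqrt (a + b))"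
      unfolding s_def c_def X_def Y_def by (simp add: field_simps)
    also have "\<dots> = (S \<omega> * b - D \<omega> * a) / sqrt (a * b * (a + b))"
      using a b by (simp add: real_sqrt_mult)
    finally show "s * X \<omega> - c * Y \<omega> = (S \<omega> * b - D \<omega> * a) / sqrt (a * b * (a + b))" .
  qed
  have sum: "(\<lambda>\<omega>. S \<omega> + D \<omega>) = (\<lambda>x. sqrt (a + b) * x) \<circ> (\<lambda>\<omega>. c * X \<omega> + s * Y \<omega>)"
    unfolding c_def s_def X_def Y_def using a b by (auto simp: field_simps)
  note rot = indep_std_normal_reflect[OF X Y XY cs s0]
  show "distributed M lborel (\<lambda>\<omega>. (S \<omega> * b - D \<omega> * a) / sqrt (a * b * (a + b))) std_normal_density"
    using rot(2) unfolding contrast .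
  have "indep_var borel ((\<lambda>x. sqrt (a + b) * x) \<circ> (\<lambda>\<omega>. c * X \<omega> + s * Y \<omega>))
      borel ((\<lambda>x. x) \<circ> (\<lambda>\<omega>. s * X \<omega> - c * Y \<omega>))"
    by (rule indep_var_compose[OF rot(1)]) simp_all
  from indep_var_sym[OF this] show "indep_var borel (\<lambda>\<omega>. (S \<omega> * b - D \<omega> * a) / sqrt (a * b * (a + b))) borel (\<lambda>\<omega>. S \<omega> + D \<omega>)"
    unfolding sum[symmetric] contrast[symmetric] by (simp add: comp_def)
qed

section \<open>Partitions\<close>

lemma consecutive_unique_right: "consecutive P a b \<Longrightarrow> consecutive P a b' \<Longrightarrow> b = b'"
  unfolding consecutive_def by (metis greaterThanLessThan_iff disjoint_iff linorder_neqE_linordered_idom)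

lemma consecutive_unique_left: "consecutive P a b \<Longrightarrow> consecutive P a' b \<Longrightarrow> a = a'"
  unfolding consecutive_def by (metis greaterThanLessThan_iff disjoint_iff linorder_neqE_linordered_idom)

lemma consecutive_no_point_between: "consecutive P a b \<Longrightarrow> x \<in> P \<Longrightarrow> a < x \<Longrightarrow> x < b \<Longrightarrow> False"
  unfolding consecutive_def by auto

lemma consecutive_eq_if_overlap:
  assumes ab: "consecutive P a b" and ab': "consecutive P a' b'"
    and x: "a < x" "x < b" "a' < x" "x < b'"
  shows "a = a' \<and> b = b'"
proof -
  have "a \<in> P" "a' \<in> P" using ab ab' unfolding consecutive_def by auto
  then have "a = a'"
    using consecutive_no_point_between[OF ab] consecutive_no_point_between[OF ab'] x
    by (metis linorder_neqE_linordered_idom order.strict_trans)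
  then show ?thesis using ab ab' consecutive_unique_right by blast
qed

lemma consecutive_Int_interval: "consecutive (P \<inter> {u..v}) a b \<Longrightarrow> consecutive P a b"
  unfolding consecutive_def by auto

lemma consecutive_subset: "consecutive P a b \<Longrightarrow> Q \<subseteq> P \<Longrightarrow> a \<in> Q \<Longrightarrow> b \<in> Q \<Longrightarrow> consecutive Q a b"
  unfolding consecutive_def by auto

lemma consecutive_exists_right:
  assumes "finite P" "a \<in> P" "b \<in> P" "a < b"
  shows "\<exists>c. consecutive P a c"
proof -
  let ?Q = "{x\<in>P. a < x}"
  have Q: "finite ?Q" "?Q \<noteq> {}" using assms by auto
  define c where "c = Min ?Q"
  have "c \<in> ?Q" "\<forall>x\<in>?Q. c \<le> x" unfolding c_def using Min_in[OF Q] Min_le[OF Q(1)] by auto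
  then have "consecutive P a c" unfolding consecutive_def using assms by force
  then show ?thesis by blast
qed

lemma partition_consecutive_bounds: "is_partition P \<Longrightarrow> consecutive P a b \<Longrightarrow> 0 \<le> a \<and> a < b \<and> b \<le> 1"
  unfolding is_partition_def consecutive_def by auto

lemma partition_interval_containing:
  assumes P: "is_partition P" and t: "0 \<le> t" "t \<le> 1"
  obtains a b where "consecutive P a b" "a \<le> t" "t \<le> b"
proof (cases "t = 1")
  case True
  let ?Q = "{x\<in>P. x < 1}"
  have Q: "finite ?Q" "?Q \<noteq> {}" using P unfolding is_partition_def by auto
  define a where "a = Max ?Q"
  have "a \<in> ?Q" "\<forall>x\<in>?Q. x \<le> a" unfolding a_def using Max_in[OF Q] Max_ge[OF Q(1)] by auto
  then have "consecutive P a 1" "a \<le> 1"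
    unfolding consecutive_def using P unfolding is_partition_def by force+
  then show ?thesis using that True by blast
next
  case False
  let ?Q = "{x\<in>P. x \<le> t}"
  have Q: "finite ?Q" "?Q \<noteq> {}" using P t unfolding is_partition_def by auto
  define a where "a = Max ?Q"
  have a: "a \<in> P" "a \<le> t" "\<And>x. x \<in> P \<Longrightarrow> x \<le> t \<Longrightarrow> x \<le> a"
    using Max_in[OF Q] Max_ge[OF Q(1)] unfolding a_def by auto
  have "1 \<in> P" "finite P" "a < 1" using P a(2) t False unfolding is_partition_def by auto
  then obtain b where ab: "consecutive P a b" using consecutive_exists_right a(1) by blast
  have "t \<le> b"
  proof (rule ccontr)
    assume "\<not> t \<le> b"
    then show False using a(3)[of b] ab unfolding consecutive_def by auto
  qed
  then show ?thesis using that ab a(2) by blast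
qed

lemma consecutive_le_mesh:
  assumes P: "is_partition P" and ab: "consecutive P a b"
  shows "b - a \<le> mesh P"
proof -
  have "{b - a | a b. consecutive P a b} \<subseteq> (\<lambda>(a, b). b - a) ` (P \<times> P)"
    unfolding consecutive_def by auto
  then have "finite {b - a | a b. consecutive P a b}"
    using P unfolding is_partition_def by (meson finite_SigmaI finite_imageI finite_subset)
  then show ?thesis unfolding mesh_def using ab by (intro Max_ge) auto
qed

lemma finite_strict_mono_enumeration:
  fixes P :: "'a::linorder set"
  assumes "finite P" "P \<noteq> {}"
  obtains p :: "nat \<Rightarrow> 'a" and n where "strict_mono_on {..n} p" "p ` {..n} = P"
proof -
  define xs where "xs = sorted_list_of_set P"
  have sorted: "sorted_wrt (<) xs" and set: "set xs = P"
    using assms(1) unfolding xs_def by simp_all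
  have len: "length xs \<ge> 1" using set assms(2) by (cases xs) auto
  have "{..length xs - 1} = {..<length xs}" using len by auto
  then have "(\<lambda>i. xs ! i) ` {..length xs - 1} = P"
    unfolding set[symmetric] by (auto simp: set_conv_nth)
  moreover have "strict_mono_on {..length xs - 1} (\<lambda>i. xs ! i)"
    using len by (intro strict_mono_onI sorted_wrt_nth_less[OF sorted]) auto
  ultimately show ?thesis using that by blast
qed

lemma consecutive_enumeration_iff:
  fixes p :: "nat \<Rightarrow> real"
  assumes p: "strict_mono_on {..n} p" and P: "p ` {..n} = P" and ij: "i \<le> n" "j \<le> n"
  shows "consecutive P (p i) (p j) \<longleftrightarrow> j = Suc i"
proof
  assume c: "consecutive P (p i) (p j)"
  then have "i < j" using strict_mono_on_less[OF p] ij unfolding consecutive_def by auto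
  moreover have "\<not> Suc i < j"
  proof
    assume "Suc i < j"
    then have "p i < p (Suc i)" "p (Suc i) < p j" "p (Suc i) \<in> P"
      using strict_mono_on_less[OF p] ij P by auto
    then show False using consecutive_no_point_between[OF c] by blast
  qed
  ultimately show "j = Suc i" by simp
next
  assume j: "j = Suc i"
  have "\<not> (p i < p l \<and> p l < p j)" if "l \<le> n" for l
    using strict_mono_on_less[OF p] ij that j by auto
  then show "consecutive P (p i) (p j)"
    using strict_mono_on_less[OF p] ij j P unfolding consecutive_def by fastforce
qed

lemma finitely_refining_partition: "finitely_refining \<pi> \<Longrightarrow> is_partition (\<pi> n)"
  unfolding finitely_refining_def by auto

lemma finitely_refining_mono:
  assumes "finitely_refining \<pi>" and "n \<le> m"
  shows "\<pi> n \<subseteq> \<pi> m"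
proof -
  have "\<pi> k \<le> \<pi> (Suc k)" for k using assms(1) unfolding finitely_refining_def by auto
  then show ?thesis using assms(2) by (rule lift_Suc_mono_le)
qed

lemma schauder_tripleD:
  assumes fr: "finitely_refining \<pi>" and tr: "(t1, t2, t3) \<in> schauder_triples \<pi> m"
  shows "0 \<le> t1" "t1 < t2" "t2 < t3" "t3 \<le> 1"
    and "t1 \<in> \<pi> m" "t2 \<in> \<pi> (Suc m)" "consecutive (\<pi> (Suc m)) t2 t3"
    and "\<And>x. x \<in> \<pi> m \<Longrightarrow> \<not> (t1 < x \<and> x < t3)"
proof -
  obtain ur where ur: "consecutive (\<pi> m) t1 ur" "t1 < t2" "t2 < ur" "t2 \<in> \<pi> (Suc m)"
      "consecutive (\<pi> (Suc m)) t2 t3" "t3 \<le> ur"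
    using tr unfolding schauder_triples_def by auto
  have P: "is_partition (\<pi> m)" "is_partition (\<pi> (Suc m))"
    using finitely_refining_partition[OF fr] by auto
  show "0 \<le> t1" using partition_consecutive_bounds[OF P(1) ur(1)] by simp
  show "t3 \<le> 1" using partition_consecutive_bounds[OF P(2) ur(5)] by simp
  show "t2 < t3" using ur(5) unfolding consecutive_def by simp
  show "t1 \<in> \<pi> m" using ur(1) unfolding consecutive_def by simp
  show "\<And>x. x \<in> \<pi> m \<Longrightarrow> \<not> (t1 < x \<and> x < t3)"
    using consecutive_no_point_between[OF ur(1)] ur(6) by fastforce
  show "t1 < t2" "t2 \<in> \<pi> (Suc m)" "consecutive (\<pi> (Suc m)) t2 t3" using ur by simp_all
qed

lemma schauder_triple_unique_right_end:
  assumes "(t1, t2, t3) \<in> schauder_triples \<pi> m" and "(t1', t2', t3) \<in> schauder_triples \<pi> m"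
  shows "t1 = t1' \<and> t2 = t2'"
proof -
  obtain ur where ur: "consecutive (\<pi> m) t1 ur" "t1 < t2" "t2 < ur" "consecutive (\<pi> (Suc m)) t2 t3"
    using assms(1) unfolding schauder_triples_def by auto
  obtain ur' where ur': "consecutive (\<pi> m) t1' ur'" "t1' < t2'" "t2' < ur'" "consecutive (\<pi> (Suc m)) t2' t3"
    using assms(2) unfolding schauder_triples_def by auto
  have "t2 = t2'" using consecutive_unique_left[OF ur(4) ur'(4)] .
  then show ?thesis using consecutive_eq_if_overlap[OF ur(1) ur'(1), of t2] ur ur' by auto
qed

lemma finite_schauder_triples:
  assumes fr: "finitely_refining \<pi>"
  shows "finite (schauder_triples \<pi> m)"
proof -
  have "schauder_triples \<pi> m \<subseteq> \<pi> m \<times> \<pi> (Suc m) \<times> \<pi> (Suc m)"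
    using schauder_tripleD[OF fr] unfolding consecutive_def by auto
  moreover have "finite (\<pi> m \<times> \<pi> (Suc m) \<times> \<pi> (Suc m))"
    using finitely_refining_partition[OF fr] unfolding is_partition_def by auto
  ultimately show ?thesis by (rule finite_subset)
qed

section \<open>Brownian increments and independence of the coefficients\<close>

lemma brownian_motion_prob_space: "brownian_motion M W \<Longrightarrow> prob_space M"
  unfolding brownian_motion_def by simp

lemma brownian_motion_measurable: "brownian_motion M W \<Longrightarrow> t \<in> {0..1} \<Longrightarrow> W t \<in> borel_measurable M"
  unfolding brownian_motion_def by simp

lemma brownian_motion_increment:
  "brownian_motion M W \<Longrightarrow> 0 \<le> s \<Longrightarrow> s < t \<Longrightarrow> t \<le> 1 \<Longrightarrow>
    distributed M lborel (\<lambda>\<omega>. W t \<omega> - W s \<omega>) (normal_density 0 (sqrt (t - s)))"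
  unfolding brownian_motion_def by blast

lemma brownian_motion_indep_increments:
  "brownian_motion M W \<Longrightarrow> 0 \<le> ts 0 \<Longrightarrow> (\<And>i. i < n \<Longrightarrow> ts i < ts (Suc i)) \<Longrightarrow> ts n \<le> 1 \<Longrightarrow>
    prob_space.indep_vars M (\<lambda>_. borel) (\<lambda>i \<omega>. W (ts (Suc i)) \<omega> - W (ts i) \<omega>) {..<n}"
  unfolding brownian_motion_def by blast

lemma brownian_motion_indep_two_increments:
  assumes bm: "brownian_motion M W" and t: "0 \<le> t1" "t1 < t2" "t2 < t3" "t3 \<le> 1"
  shows "prob_space.indep_var M borel (\<lambda>\<omega>. W t2 \<omega> - W t1 \<omega>) borel (\<lambda>\<omega>. W t3 \<omega> - W t2 \<omega>)"
proof -
  interpret prob_space M using brownian_motion_prob_space[OF bm] .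
  define ts where "ts = (\<lambda>i::nat. if i = 0 then t1 else if i = 1 then t2 else t3)"
  have "indep_vars (\<lambda>_. borel) (\<lambda>i \<omega>. W (ts (Suc i)) \<omega> - W (ts i) \<omega>) {..<2}"
    by (rule brownian_motion_indep_increments[OF bm]) (use t in \<open>auto simp: ts_def less_2_cases_iff\<close>)
  from indep_var_restrict[OF this, of "{0}" "{1}"]
  have "indep_var borel ((\<lambda>x. x 0) \<circ> (\<lambda>\<omega>. \<lambda>i\<in>{0}. W (ts (Suc i)) \<omega> - W (ts i) \<omega>))
      borel ((\<lambda>x. x 1) \<circ> (\<lambda>\<omega>. \<lambda>i\<in>{1}. W (ts (Suc i)) \<omega> - W (ts i) \<omega>))"
    by (rule indep_var_compose) (auto intro: measurable_component_singleton)
  then show ?thesis by (simp add: ts_def comp_def)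
qed

lemma eta_std_normal:
  assumes bm: "brownian_motion M W" and t: "0 \<le> t1" "t1 < t2" "t2 < t3" "t3 \<le> 1"
  shows "distributed M lborel (eta W (t1, t2, t3)) std_normal_density"
proof -
  interpret prob_space M using brownian_motion_prob_space[OF bm] .
  have "distributed M lborel (\<lambda>\<omega>. ((W t2 \<omega> - W t1 \<omega>) * (t3 - t2) - (W t3 \<omega> - W t2 \<omega>) * (t2 - t1))
      / sqrt ((t2 - t1) * (t3 - t2) * ((t2 - t1) + (t3 - t2)))) std_normal_density"
    by (rule normal_pair_decorrelation(2)[OF _ _ brownian_motion_increment[OF bm]
        brownian_motion_increment[OF bm] brownian_motion_indep_two_increments[OF bm t]]) (use t in auto)
  moreover have "eta W (t1, t2, t3) = (\<lambda>\<omega>. ((W t2 \<omega> - W t1 \<omega>) * (t3 - t2) - (W t3 \<omega> - W t2 \<omega>) * (t2 - t1))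
      / sqrt ((t2 - t1) * (t3 - t2) * ((t2 - t1) + (t3 - t2))))"
    unfolding eta_def by simp
  ultimately show ?thesis by simp
qed

lemma enumeration_through_triple:
  fixes S :: "real set"
  assumes S: "finite S" "S \<subseteq> {0..1}" "\<And>s. s \<in> S \<Longrightarrow> \<not> (t1 < s \<and> s < t3)"
    and t: "0 \<le> t1" "t1 < t2" "t2 < t3" "t3 \<le> 1"
  obtains p n k where "strict_mono_on {..n} p" "p ` {..n} = S \<union> {0, 1, t1, t2, t3}"
    "p 0 = 0" "p n = 1" "p k = t1" "p (Suc k) = t2" "p (Suc (Suc k)) = t3" "Suc (Suc k) \<le> n"
proof -
  define P where "P = S \<union> {0, 1, t1, t2, t3}"
  have "finite P" "P \<noteq> {}" using S(1) unfolding P_def by auto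
  then obtain p :: "nat \<Rightarrow> real" and n where p: "strict_mono_on {..n} p" and pP: "p ` {..n} = P"
    by (rule finite_strict_mono_enumeration)
  have P01: "P \<subseteq> {0..1}" using S(2) t unfolding P_def by auto
  have index: "\<exists>j\<le>n. p j = x" if "x \<in> P" for x using that pP by force
  have bounds: "p 0 \<le> p j" "p j \<le> p n" if "j \<le> n" for j
    using that strict_mono_on_less_eq[OF p] by auto
  have in01: "0 \<le> p j" "p j \<le> 1" if "j \<le> n" for j using that pP P01 by auto
  obtain j0 where j0: "j0 \<le> n" "p j0 = 0" using index[of 0] unfolding P_def by auto
  have p0: "p 0 = 0" using bounds(1)[OF j0(1)] in01(1)[of 0] j0(2) by simp
  obtain j1 where j1: "j1 \<le> n" "p j1 = 1" using index[of 1] unfolding P_def by auto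
  have pn: "p n = 1" using bounds(2)[OF j1(1)] in01(2)[of n] j1(2) by simp
  obtain k where k: "k \<le> n" "p k = t1" using index[of t1] unfolding P_def by auto
  obtain j2 where j2: "j2 \<le> n" "p j2 = t2" using index[of t2] unfolding P_def by auto
  obtain j3 where j3: "j3 \<le> n" "p j3 = t3" using index[of t3] unfolding P_def by auto
  have mid: "x = t2" if "x \<in> P" "t1 < x" "x < t3" for x using S(3) t that unfolding P_def by auto
  have "x \<notin> P" if "t1 < x" "x < t2" for x using mid[of x] that t by force
  moreover have "x \<notin> P" if "t2 < x" "x < t3" for x using mid[of x] that t by force
  ultimately have "consecutive P t1 t2" "consecutive P t2 t3"
    using t unfolding consecutive_def P_def by auto
  then have "j2 = Suc k" "j3 = Suc j2"
    using consecutive_enumeration_iff[OF p pP k(1) j2(1)] consecutive_enumeration_iff[OF p pP j2(1) j3(1)]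
      k(2) j2(2) j3(2) by simp_all
  then show ?thesis using that[OF p pP[unfolded P_def] p0 pn k(2)] j2 j3 by simp
qed

lemma sum_lessThan_split_adjacent:
  fixes f :: "nat \<Rightarrow> 'a::comm_monoid_add"
  assumes "j \<noteq> Suc k"
  shows "(\<Sum>i<j. f i) = (\<Sum>i\<in>{..<j} - {k, Suc k}. f i) + (if Suc (Suc k) \<le> j then f k + f (Suc k) else 0)"
proof (cases "Suc (Suc k) \<le> j")
  case True
  then have "{k, Suc k} \<subseteq> {..<j}" by auto
  then show ?thesis using True by (simp add: sum.subset_diff[of "{k, Suc k}" "{..<j}"])
next
  case False
  then have "{..<j} - {k, Suc k} = {..<j}" using assms by auto
  then show ?thesis using False by simp
qed

lemma increment_sum_split_adjacent:
  fixes w :: "real \<Rightarrow> real" and p :: "nat \<Rightarrow> real"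
  assumes p: "strict_mono_on {..n} p" and kn: "Suc (Suc k) \<le> n" and j: "j \<le> n" "j \<noteq> Suc k"
  shows "w (p j) - w (p 0) = (\<Sum>i\<in>{i\<in>{..<n} - {k, Suc k}. p (Suc i) \<le> p j}. w (p (Suc i)) - w (p i))
          + (if p (Suc (Suc k)) \<le> p j then w (p (Suc (Suc k))) - w (p k) else 0)"
proof -
  have "{i\<in>{..<n} - {k, Suc k}. p (Suc i) \<le> p j} = {..<j} - {k, Suc k}"
    using strict_mono_on_less_eq[OF p] j by auto
  moreover have "p (Suc (Suc k)) \<le> p j \<longleftrightarrow> Suc (Suc k) \<le> j"
    using strict_mono_on_less_eq[OF p] kn j by auto
  moreover have "w (p j) - w (p 0) = (\<Sum>i<j. w (p (Suc i)) - w (p i))"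
    by (rule sum_lessThan_telescope[symmetric])
  ultimately show ?thesis
    using sum_lessThan_split_adjacent[OF j(2), of "\<lambda>i. w (p (Suc i)) - w (p i)"] by simp
qed

(* The path at points of \<open>S\<close> is a function of \<open>W t3 - W t1\<close> and of the increments over the other
   intervals of an enumeration of \<open>S \<union> {0, 1, t1, t2, t3}\<close>, whereas \<open>\<eta>\<close> depends only on the increments
   over \<open>[t1,t2]\<close> and \<open>[t2,t3]\<close> and is independent of their sum. *)
lemma eta_indep_path_outside:
  assumes bm: "brownian_motion M W" and t: "0 \<le> t1" "t1 < t2" "t2 < t3" "t3 \<le> 1"
    and S: "finite S" "S \<subseteq> {0..1}" "\<And>s. s \<in> S \<Longrightarrow> \<not> (t1 < s \<and> s < t3)"
    and A: "A \<in> sets borel" and C: "C \<in> sets (PiM S (\<lambda>_. borel))"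
  shows "measure M (eta W (t1, t2, t3) -` A \<inter> (\<lambda>\<omega>. \<lambda>s\<in>S. W s \<omega> - W 0 \<omega>) -` C \<inter> space M)
       = measure M (eta W (t1, t2, t3) -` A \<inter> space M) * measure M ((\<lambda>\<omega>. \<lambda>s\<in>S. W s \<omega> - W 0 \<omega>) -` C \<inter> space M)"
proof -
  interpret prob_space M using brownian_motion_prob_space[OF bm] .
  obtain p n k where p: "strict_mono_on {..n} p" and pP: "p ` {..n} = S \<union> {0, 1, t1, t2, t3}"
    and p0: "p 0 = 0" and pn: "p n = 1"
    and pk: "p k = t1" "p (Suc k) = t2" "p (Suc (Suc k)) = t3" and kn: "Suc (Suc k) \<le> n"
    by (rule enumeration_through_triple[OF S t])
  define \<Delta> where "\<Delta> = (\<lambda>i \<omega>. W (p (Suc i)) \<omega> - W (p i) \<omega>)"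
  have "indep_vars (\<lambda>_. borel) \<Delta> {..<n}"
    unfolding \<Delta>_def using strict_mono_onD[OF p] p0 pn
    by (intro brownian_motion_indep_increments[OF bm]) auto
  moreover define R where "R = {..<n} - {k, Suc k}"
  ultimately have IV: "indep_var (PiM {k, Suc k} (\<lambda>_. borel)) (\<lambda>\<omega>. \<lambda>i\<in>{k, Suc k}. \<Delta> i \<omega>)
      (PiM R (\<lambda>_. borel)) (\<lambda>\<omega>. \<lambda>i\<in>R. \<Delta> i \<omega>)"
    using kn by (intro indep_var_restrict) auto
  define a where "a = t2 - t1"
  define b where "b = t3 - t2"
  define f where "f = (\<lambda>v::nat \<Rightarrow> real. (v k * b - v (Suc k) * a) / sqrt (a * b * (a + b)))"
  define g where "g = (\<lambda>v::nat \<Rightarrow> real. v k + v (Suc k))"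
  have fm: "f \<in> borel_measurable (PiM {k, Suc k} (\<lambda>_. borel))" unfolding f_def by measurable
  have gm: "g \<in> borel_measurable (PiM {k, Suc k} (\<lambda>_. borel))" unfolding g_def by measurable
  have eta_eq: "eta W (t1, t2, t3) = (\<lambda>\<omega>. f (\<lambda>i\<in>{k, Suc k}. \<Delta> i \<omega>))"
    unfolding f_def \<Delta>_def eta_def a_def b_def using pk by (simp add: algebra_simps)
  have fg: "indep_var borel (\<lambda>\<omega>. f (\<lambda>i\<in>{k, Suc k}. \<Delta> i \<omega>)) borel (\<lambda>\<omega>. g (\<lambda>i\<in>{k, Suc k}. \<Delta> i \<omega>))"
  proof -
    have "indep_var borel (\<lambda>\<omega>. ((W t2 \<omega> - W t1 \<omega>) * b - (W t3 \<omega> - W t2 \<omega>) * a) / sqrt (a * b * (a + b)))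
        borel (\<lambda>\<omega>. (W t2 \<omega> - W t1 \<omega>) + (W t3 \<omega> - W t2 \<omega>))"
      unfolding a_def b_def
      by (rule normal_pair_decorrelation(1)[OF _ _ brownian_motion_increment[OF bm]
          brownian_motion_increment[OF bm] brownian_motion_indep_two_increments[OF bm t]]) (use t in auto)
    then show ?thesis unfolding f_def g_def \<Delta>_def using pk by simp
  qed
  define \<Psi> where "\<Psi> = (\<lambda>x::real \<times> (nat \<Rightarrow> real). \<lambda>s\<in>S.
      (\<Sum>i\<in>{i\<in>R. p (Suc i) \<le> s}. snd x i) + (if t3 \<le> s then fst x else 0))"
  have \<Psi>m: "\<Psi> \<in> measurable (borel \<Otimes>\<^sub>M PiM R (\<lambda>_. borel)) (PiM S (\<lambda>_. borel))"
    unfolding \<Psi>_def by (intro measurable_restrict borel_measurable_add borel_measurable_sum) auto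
  have path: "(\<lambda>s\<in>S. W s \<omega> - W 0 \<omega>) = \<Psi> (g (\<lambda>i\<in>{k, Suc k}. \<Delta> i \<omega>), \<lambda>i\<in>R. \<Delta> i \<omega>)" for \<omega>
  proof
    fix s
    show "(\<lambda>s\<in>S. W s \<omega> - W 0 \<omega>) s = \<Psi> (g (\<lambda>i\<in>{k, Suc k}. \<Delta> i \<omega>), \<lambda>i\<in>R. \<Delta> i \<omega>) s"
    proof (cases "s \<in> S")
      case True
      then obtain j where j: "j \<le> n" "p j = s" using pP by (metis UnI1 atMost_iff imageE)
      have "j \<noteq> Suc k" using S(3)[OF True] j(2) pk t by auto
      from increment_sum_split_adjacent[OF p kn j(1) this, of "\<lambda>s. W s \<omega>"]
      have "W s \<omega> - W 0 \<omega> = (\<Sum>i\<in>{i\<in>R. p (Suc i) \<le> s}. \<Delta> i \<omega>) + (if t3 \<le> s then W t3 \<omega> - W t1 \<omega> else 0)"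
        using j(2) p0 pk unfolding R_def \<Delta>_def by simp
      moreover have "(\<Sum>i\<in>{i\<in>R. p (Suc i) \<le> s}. (\<lambda>i\<in>R. \<Delta> i \<omega>) i) = (\<Sum>i\<in>{i\<in>R. p (Suc i) \<le> s}. \<Delta> i \<omega>)"
        by (rule sum.cong) auto
      moreover have "g (\<lambda>i\<in>{k, Suc k}. \<Delta> i \<omega>) = W t3 \<omega> - W t1 \<omega>" unfolding g_def \<Delta>_def using pk by simp
      ultimately show ?thesis using True unfolding \<Psi>_def by simp
    qed (simp add: \<Psi>_def)
  qed
  let ?V = "\<lambda>\<omega>. (g (\<lambda>i\<in>{k, Suc k}. \<Delta> i \<omega>), \<lambda>i\<in>R. \<Delta> i \<omega>)"
  have Vm: "?V \<in> measurable M (borel \<Otimes>\<^sub>M PiM R (\<lambda>_. borel))"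
    using indep_var_rv1[OF IV] indep_var_rv2[OF IV] gm by measurable
  define C' where "C' = \<Psi> -` C \<inter> space (borel \<Otimes>\<^sub>M PiM R (\<lambda>_. borel))"
  have C': "C' \<in> sets (borel \<Otimes>\<^sub>M PiM R (\<lambda>_. borel))" unfolding C'_def using \<Psi>m C by (rule measurable_sets)
  have pre: "(\<lambda>\<omega>. \<lambda>s\<in>S. W s \<omega> - W 0 \<omega>) -` C \<inter> space M = ?V -` C' \<inter> space M"
    unfolding C'_def path using measurable_space[OF Vm] by auto
  have "eta W (t1, t2, t3) -` A \<inter> (\<lambda>\<omega>. \<lambda>s\<in>S. W s \<omega> - W 0 \<omega>) -` C \<inter> space M
      = (\<lambda>\<omega>. f (\<lambda>i\<in>{k, Suc k}. \<Delta> i \<omega>)) -` A \<inter> ?V -` C' \<inter> space M"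
    using pre unfolding eta_eq by (simp add: Int_assoc)
  then show ?thesis
    using indep_prob_pair_extend[OF IV fg fm gm A C'] pre eta_eq by simp
qed

(* The member of maximal level with leftmost right end: knots of coarser levels are knots of \<open>\<pi> m\<close>,
   and the other triples of the same level lie to the right of its interval. *)
lemma schauder_triples_isolated_member:
  assumes fr: "finitely_refining \<pi>"
    and K: "finite K" "K \<noteq> {}" "K \<subseteq> (SIGMA m:UNIV. schauder_triples \<pi> m)"
  obtains m t1 t2 t3 where "(m, (t1, t2, t3)) \<in> K"
    and "\<And>m' a b c x. (m', (a, b, c)) \<in> K - {(m, (t1, t2, t3))} \<Longrightarrow> x \<in> {a, b, c} \<Longrightarrow> \<not> (t1 < x \<and> x < t3)"
proof -
  define m where "m = Max (fst ` K)"
  have m_max: "fst i \<le> m" if "i \<in> K" for i unfolding m_def using K(1) that by auto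
  define K0 where "K0 = {tr. (m, tr) \<in> K}"
  have "K0 = snd ` (K \<inter> {i. fst i = m})" unfolding K0_def by force
  moreover have "m \<in> fst ` K" unfolding m_def using K by (intro Max_in) auto
  ultimately have K0: "finite K0" "K0 \<noteq> {}" using K(1) unfolding K0_def by force+
  have "Min ((\<lambda>tr. snd (snd tr)) ` K0) \<in> (\<lambda>tr. snd (snd tr)) ` K0" using K0 by (intro Min_in) auto
  then obtain t1 t2 t3 where j: "(t1, t2, t3) \<in> K0" and t3: "t3 = Min ((\<lambda>tr. snd (snd tr)) ` K0)"
    by force
  have t3_min: "t3 \<le> snd (snd tr)" if "tr \<in> K0" for tr unfolding t3 using K0(1) that by simp
  have jT: "(t1, t2, t3) \<in> schauder_triples \<pi> m" using j K(3) unfolding K0_def by auto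
  note J = schauder_tripleD[OF fr jT]
  have "\<not> (t1 < x \<and> x < t3)" if i: "(m', (a, b, c)) \<in> K - {(m, (t1, t2, t3))}" and x: "x \<in> {a, b, c}"
    for m' a b c x
  proof -
    have iT: "(a, b, c) \<in> schauder_triples \<pi> m'" using i K(3) by auto
    note Ip = schauder_tripleD[OF fr iT]
    have "m' \<le> m" using m_max[of "(m', (a, b, c))"] i by simp
    then consider "m' < m" | "m' = m" by linarith
    then show ?thesis
    proof cases
      case 1
      then have "\<pi> (Suc m') \<subseteq> \<pi> m" using finitely_refining_mono[OF fr, of "Suc m'" m] by simp
      moreover have "a \<in> \<pi> (Suc m')" "b \<in> \<pi> (Suc m')" "c \<in> \<pi> (Suc m')"
        using Ip(5,6,7) finitely_refining_mono[OF fr, of m' "Suc m'"] unfolding consecutive_def by auto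
      ultimately show ?thesis using J(8) x by blast
    next
      case 2
      have "c \<noteq> t3"
      proof
        assume "c = t3"
        then have "a = t1 \<and> b = t2" using schauder_triple_unique_right_end[OF iT] jT 2 by auto
        then show False using i 2 \<open>c = t3\<close> by simp
      qed
      then have "t3 < c" using t3_min[of "(a, b, c)"] i 2 unfolding K0_def by force
      moreover have "t3 \<le> b"
        using consecutive_no_point_between[OF Ip(7)] J(7) 2 \<open>t3 < c\<close>
        unfolding consecutive_def by force
      moreover have "\<not> (t1 < a \<and> a < t3)" using J(8) Ip(5) 2 by simp
      ultimately show ?thesis using x by auto
    qed
  qed
  then show ?thesis using that j unfolding K0_def by blast
qed

lemma eta_factors_through_path:
  assumes "a \<in> S" "b \<in> S" "c \<in> S"
  shows "\<exists>h \<in> borel_measurable (PiM S (\<lambda>_. borel)). \<forall>\<omega>. eta W (a, b, c) \<omega> = h (\<lambda>s\<in>S. W s \<omega> - W 0 \<omega>)"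
proof
  let ?h = "\<lambda>v. ((v b - v a) * (c - b) - (v c - v b) * (b - a)) / sqrt ((b - a) * (c - b) * (c - a))"
  show "?h \<in> borel_measurable (PiM S (\<lambda>_. borel))" using assms by measurable
  show "\<forall>\<omega>. eta W (a, b, c) \<omega> = ?h (\<lambda>s\<in>S. W s \<omega> - W 0 \<omega>)"
    unfolding eta_def using assms by (simp add: algebra_simps)
qed

lemma eta_indep_vars:
  assumes fr: "finitely_refining \<pi>" and bm: "brownian_motion M W"
  shows "prob_space.indep_vars M (\<lambda>_. borel) (\<lambda>(m, tr). eta W tr) (SIGMA m:UNIV. schauder_triples \<pi> m)"
proof -
  interpret prob_space M using brownian_motion_prob_space[OF bm] .
  define I where "I = (SIGMA m:UNIV. schauder_triples \<pi> m)"
  define X where "X = (\<lambda>(m::nat, tr). eta W tr)"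
  have rv: "X i \<in> borel_measurable M" if "i \<in> I" for i
  proof -
    obtain m t1 t2 t3 where i: "i = (m, (t1, t2, t3))" by (cases i) auto
    have "(t1, t2, t3) \<in> schauder_triples \<pi> m" using that unfolding i I_def by simp
    from distributed_measurable[OF eta_std_normal[OF bm schauder_tripleD(1-4)[OF fr this]]]
    show ?thesis unfolding i X_def by simp
  qed
  have fin: "indep_vars (\<lambda>_. borel) X J" if J: "J \<subseteq> I" "finite J" for J
  proof (rule indep_vars_by_peeling[OF J(2)])
    show "\<And>i. i \<in> J \<Longrightarrow> random_variable borel (X i)" using rv J by auto
    fix K assume K: "K \<subseteq> J" "K \<noteq> {}"
    have Kfin: "finite K" and KI: "K \<subseteq> (SIGMA m:UNIV. schauder_triples \<pi> m)"
      using K J finite_subset unfolding I_def by auto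
    obtain m t1 t2 t3 where jK: "(m, (t1, t2, t3)) \<in> K"
      and outside: "\<And>m' a b c x. (m', (a, b, c)) \<in> K - {(m, (t1, t2, t3))} \<Longrightarrow> x \<in> {a, b, c} \<Longrightarrow> \<not> (t1 < x \<and> x < t3)"
      by (rule schauder_triples_isolated_member[OF fr Kfin K(2) KI]) (rule that)
    define j where "j = (m, (t1, t2, t3))"
    have jT: "(t1, t2, t3) \<in> schauder_triples \<pi> m" using jK K J unfolding I_def by auto
    define S where "S = (\<Union>i\<in>K - {j}. {fst (snd i), fst (snd (snd i)), snd (snd (snd i))})"
    have S_fin: "finite S" unfolding S_def using Kfin by auto
    have S_point: "\<exists>m' a b c. (m', (a, b, c)) \<in> K - {j} \<and> s \<in> {a, b, c}" if "s \<in> S" for s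
    proof -
      obtain i where i: "i \<in> K - {j}" "s \<in> {fst (snd i), fst (snd (snd i)), snd (snd (snd i))}"
        using \<open>s \<in> S\<close> unfolding S_def by blast
      obtain m' a b c where "i = (m', (a, b, c))" by (cases i) auto
      then show ?thesis using i by auto
    qed
    have S_out: "\<not> (t1 < s \<and> s < t3)" if s: "s \<in> S" for s
    proof -
      obtain m' a b c where "(m', (a, b, c)) \<in> K - {j}" "s \<in> {a, b, c}" using S_point[OF s] by blast
      then show ?thesis unfolding j_def by (rule outside)
    qed
    have S01: "S \<subseteq> {0..1}"
    proof
      fix s assume "s \<in> S"
      from S_point[OF this] obtain m' a b c where i: "(m', (a, b, c)) \<in> K" and s: "s \<in> {a, b, c}"
        by blast
      have "(a, b, c) \<in> schauder_triples \<pi> m'" using i K J unfolding I_def by auto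
      from schauder_tripleD(1-4)[OF fr this] show "s \<in> {0..1}" using s by auto
    qed
    define Y where "Y = (\<lambda>\<omega>. \<lambda>s\<in>S. W s \<omega> - W 0 \<omega>)"
    have Y: "Y \<in> measurable M (PiM S (\<lambda>_. borel))"
      unfolding Y_def using brownian_motion_measurable[OF bm] S01 by (intro measurable_restrict) auto
    have "\<exists>h \<in> borel_measurable (PiM S (\<lambda>_. borel)). \<forall>\<omega>\<in>space M. X i \<omega> = h (Y \<omega>)" if i: "i \<in> K - {j}" for i
    proof -
      obtain m' a b c where ie: "i = (m', (a, b, c))" by (cases i) auto
      have "a \<in> S" "b \<in> S" "c \<in> S" unfolding S_def using i ie by force+
      from eta_factors_through_path[OF this, of W] show ?thesis unfolding X_def Y_def ie by auto
    qed
    moreover have "\<forall>A\<in>sets borel. \<forall>C\<in>sets (PiM S (\<lambda>_. borel)).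
        prob (X j -` A \<inter> Y -` C \<inter> space M) = prob (X j -` A \<inter> space M) * prob (Y -` C \<inter> space M)"
      unfolding X_def j_def Y_def
      using eta_indep_path_outside[OF bm schauder_tripleD(1-4)[OF fr jT] S_fin S01 S_out] by simp
    ultimately show "\<exists>j\<in>K. \<exists>(N::(real \<Rightarrow> real) measure) Y. Y \<in> measurable M N \<and>
        (\<forall>i\<in>K - {j}. \<exists>h \<in> measurable N borel. \<forall>\<omega>\<in>space M. X i \<omega> = h (Y \<omega>)) \<and>
        (\<forall>A\<in>sets borel. \<forall>C\<in>sets N.
          prob (X j -` A \<inter> Y -` C \<inter> space M) = prob (X j -` A \<inter> space M) * prob (Y -` C \<inter> space M))"
      using jK Y unfolding j_def by blast
  qed
  have "indep_vars (\<lambda>_. borel) X I" by (rule indep_vars_finite_index_sets[OF rv fin])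
  then show ?thesis unfolding I_def X_def .
qed

section \<open>Schauder functions\<close>

lemma has_integral_indicator_interval:
  fixes a b c d :: real
  shows "((\<lambda>x. if x \<in> {a..b} then 1 else 0) has_integral (max 0 (min b d - max a c))) {c..d}"
proof -
  have "((\<lambda>x. 1::real) has_integral Henstock_Kurzweil_Integration.content {max a c..min b d} *\<^sub>R 1)
      {max a c..min b d}"
    by (rule has_integral_const_real)
  moreover have "(if x \<le> y then y - x else 0) = max 0 (y - x)" for x y :: real by auto
  ultimately have "((\<lambda>x. 1::real) has_integral (max 0 (min b d - max a c))) ({a..b} \<inter> {c..d})"
    by (simp only: content_real_if Int_atLeastAtMost real_scaleR_def mult_1_right)
  then show ?thesis by (subst has_integral_restrict_Int) simp
qed

lemma sqrt_ratio_eq: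
  fixes a b c :: real
  assumes "0 < a" "0 < b" "0 < c"
  shows "sqrt (b / (a * c)) = b / sqrt (a * b * c)"
proof -
  have "b * b / (a * b * c) = b * b / (b * (a * c))" by (simp add: ac_simps)
  then have "b / (a * c) = b * b / (a * b * c)" using assms by simp
  then have "sqrt (b / (a * c)) = sqrt (b * b / (a * b * c))" by simp
  also have "\<dots> = b / sqrt (a * b * c)"
    using assms by (simp only: real_sqrt_divide real_sqrt_abs2 abs_of_pos)
  finally show ?thesis .
qed

lemma schauder_fun_eq:
  assumes t: "0 \<le> t1" "t1 < t2" "t2 < t3"
  shows "schauder_fun (t1, t2, t3) t
    = ((t3 - t2) * max 0 (min t2 t - t1) - (t2 - t1) * max 0 (min t3 t - t2))
      / sqrt ((t2 - t1) * (t3 - t2) * (t3 - t1))"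
proof -
  define r where "r = sqrt ((t2 - t1) * (t3 - t2) * (t3 - t1))"
  have up: "sqrt ((t3 - t2) / ((t2 - t1) * (t3 - t1))) = (t3 - t2) / r"
    unfolding r_def using t by (intro sqrt_ratio_eq) simp_all
  have "(t3 - t2) * (t2 - t1) * (t3 - t1) = (t2 - t1) * (t3 - t2) * (t3 - t1)" by (simp add: mult.commute)
  then have down: "sqrt ((t2 - t1) / ((t3 - t2) * (t3 - t1))) = (t2 - t1) / r"
    using sqrt_ratio_eq[of "t3 - t2" "t2 - t1" "t3 - t1"] t unfolding r_def by simp
  let ?\<chi> = "\<lambda>a b x. if x \<in> {a..b} then 1 else (0::real)"
  have "(?\<chi> t1 t2 has_integral max 0 (min t2 t - t1)) {0..t}"
    using has_integral_indicator_interval[where a=t1 and b=t2 and c=0 and d=t] t by (simp add: max_absorb1)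
  moreover have "(?\<chi> t2 t3 has_integral max 0 (min t3 t - t2)) {0..t}"
    using has_integral_indicator_interval[where a=t2 and b=t3 and c=0 and d=t] t by (simp add: max_absorb1)
  ultimately have step: "((\<lambda>x. (t3 - t2) / r * ?\<chi> t1 t2 x - (t2 - t1) / r * ?\<chi> t2 t3 x) has_integral
      ((t3 - t2) / r * max 0 (min t2 t - t1) - (t2 - t1) / r * max 0 (min t3 t - t2))) {0..t}"
    by (intro has_integral_diff has_integral_mult_right)
  have haar: "haar_fun (t1, t2, t3) x = (t3 - t2) / r * ?\<chi> t1 t2 x - (t2 - t1) / r * ?\<chi> t2 t3 x"
    if x: "x \<in> {0..t} - {t2, t3}" for x
  proof -
    consider "x < t1" | "t1 \<le> x \<and> x < t2" | "t2 < x \<and> x < t3" | "t3 < x" using x by force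
    then show ?thesis using t unfolding haar_fun_def by cases (simp_all add: up down)
  qed
  have "(haar_fun (t1, t2, t3) has_integral
      ((t3 - t2) / r * max 0 (min t2 t - t1) - (t2 - t1) / r * max 0 (min t3 t - t2))) {0..t}"
    by (rule has_integral_spike_finite[where S="{t2, t3}", OF _ haar step]) simp
  then have "schauder_fun (t1, t2, t3) t
      = (t3 - t2) / r * max 0 (min t2 t - t1) - (t2 - t1) / r * max 0 (min t3 t - t2)"
    unfolding schauder_fun_def by (rule integral_unique)
  also have "\<dots> = ((t3 - t2) * max 0 (min t2 t - t1) - (t2 - t1) * max 0 (min t3 t - t2)) / r"
    by (simp add: diff_divide_distrib left_diff_distrib)
  finally show ?thesis unfolding r_def .
qed

definition lin_interp :: "(real \<Rightarrow> real) \<Rightarrow> real \<Rightarrow> real \<Rightarrow> real \<Rightarrow> real" where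
  "lin_interp w a b t = w a + (w b - w a) * (t - a) / (b - a)"

definition knot_insertion :: "(real \<Rightarrow> real) \<Rightarrow> real \<Rightarrow> real \<Rightarrow> real \<Rightarrow> real \<Rightarrow> real" where
  "knot_insertion w t1 t2 t3 t =
    (if t \<le> t1 \<or> t3 \<le> t then 0
     else if t \<le> t2 then lin_interp w t1 t2 t - lin_interp w t1 t3 t
     else lin_interp w t2 t3 t - lin_interp w t1 t3 t)"

lemma lin_interp_left [simp]: "lin_interp w a b a = w a"
  unfolding lin_interp_def by simp

lemma lin_interp_right: "a \<noteq> b \<Longrightarrow> lin_interp w a b b = w b"
  unfolding lin_interp_def by simp

lemma chord_difference_rising:
  fixes a b u w1 w2 w3 :: real
  assumes "0 < a" "0 < b"
  shows "((w2 - w1) * b - (w3 - w2) * a) * b * u / (a * b * (a + b))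
       = (w2 - w1) * u / a - (w3 - w1) * u / (a + b)"
proof -
  have nz: "a \<noteq> 0" "b \<noteq> 0" "a + b \<noteq> 0" using assms by auto
  have "((w2 - w1) * b - (w3 - w2) * a) * b * u / (a * b * (a + b))
      = (b * (((w2 - w1) * b - (w3 - w2) * a) * u)) / (b * (a * (a + b)))"
    by (simp add: ac_simps)
  also have "\<dots> = (((w2 - w1) * b - (w3 - w2) * a) * u) / (a * (a + b))" using nz by simp
  also have "\<dots> = ((w2 - w1) * u * (a + b) - (w3 - w1) * u * a) / (a * (a + b))"
    by (simp add: algebra_simps)
  also have "\<dots> = (w2 - w1) * u / a - (w3 - w1) * u / (a + b)"
    using nz by (simp add: diff_frac_eq)
  finally show ?thesis .
qed

lemma chord_difference_falling:
  fixes a b u w1 w2 w3 :: real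
  assumes "0 < a" "0 < b"
  shows "((w2 - w1) * b - (w3 - w2) * a) * a * (b - u) / (a * b * (a + b))
       = (w2 + (w3 - w2) * u / b) - (w1 + (w3 - w1) * (a + u) / (a + b))"
proof -
  have nz: "a \<noteq> 0" "b \<noteq> 0" "a + b \<noteq> 0" using assms by auto
  have "((w2 - w1) * b - (w3 - w2) * a) * a * (b - u) / (a * b * (a + b))
      = (a * (((w2 - w1) * b - (w3 - w2) * a) * (b - u))) / (a * (b * (a + b)))"
    by (simp add: ac_simps)
  also have "\<dots> = (((w2 - w1) * b - (w3 - w2) * a) * (b - u)) / (b * (a + b))" using nz by simp
  also have "\<dots> = ((w2 - w1) * b * (a + b) + (w3 - w2) * u * (a + b) - (w3 - w1) * (a + u) * b) / (b * (a + b))"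
    by (simp add: algebra_simps)
  also have "\<dots> = (w2 - w1) + (w3 - w2) * u / b - (w3 - w1) * (a + u) / (a + b)"
    using nz by (simp add: add_divide_distrib diff_divide_distrib)
  finally show ?thesis by simp
qed

lemma eta_mult_schauder_fun:
  assumes t: "0 \<le> t1" "t1 < t2" "t2 < t3"
  shows "eta W (t1, t2, t3) \<omega> * schauder_fun (t1, t2, t3) t = knot_insertion (\<lambda>s. W s \<omega>) t1 t2 t3 t"
proof -
  define a where "a = t2 - t1"
  define b where "b = t3 - t2"
  have a: "0 < a" and b: "0 < b" and ab: "t3 - t1 = a + b" using t unfolding a_def b_def by auto
  define r where "r = sqrt (a * b * (a + b))"
  have r: "0 < r" "r * r = a * b * (a + b)" unfolding r_def using a b by simp_all
  define N where "N = (W t2 \<omega> - W t1 \<omega>) * b - (W t3 \<omega> - W t2 \<omega>) * a"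
  have eta: "eta W (t1, t2, t3) \<omega> = N / r"
    unfolding eta_def N_def r_def a_def b_def by (simp add: algebra_simps)
  have sf: "schauder_fun (t1, t2, t3) t = (b * max 0 (min t2 t - t1) - a * max 0 (min t3 t - t2)) / r"
    unfolding schauder_fun_eq[OF t] r_def ab[symmetric] a_def b_def by (simp add: algebra_simps)
  consider "t \<le> t1" | "t1 < t \<and> t \<le> t2" | "t2 < t \<and> t < t3" | "t3 \<le> t" by linarith
  then show ?thesis
  proof cases
    case 2
    then have "max 0 (min t2 t - t1) = t - t1" "max 0 (min t3 t - t2) = 0" using t by auto
    then have "eta W (t1, t2, t3) \<omega> * schauder_fun (t1, t2, t3) t = N * b * (t - t1) / (r * r)"
      unfolding eta sf by simp
    also have "\<dots> = lin_interp (\<lambda>s. W s \<omega>) t1 t2 t - lin_interp (\<lambda>s. W s \<omega>) t1 t3 t"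
      unfolding r(2) lin_interp_def N_def ab chord_difference_rising[OF a b] unfolding a_def b_def by simp
    finally show ?thesis using 2 t by (simp add: knot_insertion_def)
  next
    case 3
    then have "max 0 (min t2 t - t1) = a" "max 0 (min t3 t - t2) = t - t2" using t unfolding a_def by auto
    then have "eta W (t1, t2, t3) \<omega> * schauder_fun (t1, t2, t3) t = N / r * ((b * a - a * (t - t2)) / r)"
      unfolding eta sf by simp
    also have "\<dots> = N * a * (b - (t - t2)) / (r * r)" using r(1) by (simp add: field_simps)
    also have "\<dots> = lin_interp (\<lambda>s. W s \<omega>) t2 t3 t - lin_interp (\<lambda>s. W s \<omega>) t1 t3 t"
      unfolding r(2) lin_interp_def N_def ab chord_difference_falling[OF a b] unfolding a_def b_def by simp
    finally show ?thesis using 3 t by (simp add: knot_insertion_def)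
  qed (use t in \<open>auto simp: sf a_def b_def max_def min_def knot_insertion_def\<close>)
qed

section \<open>Piecewise linear interpolation and the level sums\<close>

(* Unspecified (\<open>SOME\<close> of an empty predicate) outside the convex hull of \<open>P\<close>. *)
definition pw_interp :: "(real \<Rightarrow> real) \<Rightarrow> real set \<Rightarrow> real \<Rightarrow> real" where
  "pw_interp w P t = (SOME v. \<exists>a b. consecutive P a b \<and> a \<le> t \<and> t \<le> b \<and> v = lin_interp w a b t)"

lemma lin_interp_consecutive_eq:
  assumes ab: "consecutive P a b" "a \<le> t" "t \<le> b" and ab': "consecutive P a' b'" "a' \<le> t" "t \<le> b'"
  shows "lin_interp w a b t = lin_interp w a' b' t"
proof -
  have at_end: "lin_interp w x y t = w t" if "consecutive P x y" "t = x \<or> t = y" for x y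
    using that lin_interp_right[of x y w] unfolding consecutive_def by auto
  show ?thesis
  proof (cases "a < t \<and> t < b")
    case True
    then have "t \<notin> P" using consecutive_no_point_between[OF ab(1)] by blast
    then have "a' < t \<and> t < b'" using ab' unfolding consecutive_def by auto
    then have "a = a' \<and> b = b'" using consecutive_eq_if_overlap[OF ab(1) ab'(1)] True by blast
    then show ?thesis by simp
  next
    case False
    then have "t = a \<or> t = b" using ab by auto
    moreover from this have "t \<in> P" using ab unfolding consecutive_def by auto
    then have "t = a' \<or> t = b'" using consecutive_no_point_between[OF ab'(1)] ab'(2,3) by force
    ultimately show ?thesis using at_end[OF ab(1)] at_end[OF ab'(1)] by simp
  qed
qed

lemma pw_interp_eq:
  assumes "consecutive P a b" "a \<le> t" "t \<le> b"
  shows "pw_interp w P t = lin_interp w a b t"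
  unfolding pw_interp_def
proof (rule someI2)
  show "\<exists>a' b'. consecutive P a' b' \<and> a' \<le> t \<and> t \<le> b' \<and> lin_interp w a b t = lin_interp w a' b' t"
    using assms by blast
next
  fix v assume "\<exists>a' b'. consecutive P a' b' \<and> a' \<le> t \<and> t \<le> b' \<and> v = lin_interp w a' b' t"
  then show "v = lin_interp w a b t" using lin_interp_consecutive_eq[OF assms] by metis
qed

lemma knot_insertion_sum:
  fixes q :: "nat \<Rightarrow> real"
  assumes q: "strict_mono_on {..r} q" and cons: "\<And>j. j < r \<Longrightarrow> consecutive P (q j) (q (Suc j))"
    and i: "1 \<le> i" "i \<le> r" and t: "q 0 \<le> t"
  shows "(\<Sum>l=2..i. knot_insertion w (q 0) (q (l - 1)) (q l) t)
       = (if t \<le> q i then pw_interp w P t - lin_interp w (q 0) (q i) t else 0)"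
  using i
proof (induction i rule: dec_induct)
  case base
  have "pw_interp w P t = lin_interp w (q 0) (q 1) t" if "t \<le> q 1"
    using pw_interp_eq[OF cons[of 0] t] that i by simp
  then show ?case by simp
next
  case (step i)
  have qi: "q 0 < q i" "q i < q (Suc i)" using strict_mono_onD[OF q] step by auto
  have sum: "(\<Sum>l=2..Suc i. knot_insertion w (q 0) (q (l - 1)) (q l) t)
      = (\<Sum>l=2..i. knot_insertion w (q 0) (q (l - 1)) (q l) t) + knot_insertion w (q 0) (q i) (q (Suc i)) t"
    using step by (simp add: atLeastAtMostSuc_conv)
  also have "\<dots> = (if t \<le> q i then pw_interp w P t - lin_interp w (q 0) (q i) t else 0)
      + knot_insertion w (q 0) (q i) (q (Suc i)) t"
    using step by simp
  finally have split: "(\<Sum>l=2..Suc i. knot_insertion w (q 0) (q (l - 1)) (q l) t)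
      = (if t \<le> q i then pw_interp w P t - lin_interp w (q 0) (q i) t else 0)
        + knot_insertion w (q 0) (q i) (q (Suc i)) t" .
  have here: "pw_interp w P t = lin_interp w (q i) (q (Suc i)) t" if "q i \<le> t" "t \<le> q (Suc i)"
    using pw_interp_eq[OF cons that] step by simp
  consider "t \<le> q 0" | "q 0 < t \<and> t \<le> q i" | "q i < t \<and> t < q (Suc i)" | "t = q (Suc i)" | "q (Suc i) < t"
    by linarith
  then show ?case
  proof cases
    case 1
    have "q 0 < q 1" using strict_mono_onD[OF q] step by auto
    then have "pw_interp w P (q 0) = w (q 0)" using pw_interp_eq[OF cons[of 0], of "q 0"] step by simp
    then show ?thesis unfolding split using 1 qi t by (simp add: knot_insertion_def)
  next
    case 2
    then show ?thesis unfolding split using qi by (simp add: knot_insertion_def)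
  next
    case 3
    then show ?thesis unfolding split using qi here by (simp add: knot_insertion_def)
  next
    case 4
    then have "pw_interp w P t = w t" using here qi lin_interp_right[of "q i" "q (Suc i)" w] by simp
    moreover have "lin_interp w (q 0) (q (Suc i)) t = w t" using 4 qi lin_interp_right[of "q 0" "q (Suc i)" w] by simp
    ultimately show ?thesis unfolding split using qi 4 by (simp add: knot_insertion_def)
  next
    case 5
    then show ?thesis unfolding split using qi by (simp add: knot_insertion_def)
  qed
qed

lemma schauder_triples_left_end:
  fixes q :: "nat \<Rightarrow> real"
  assumes U: "consecutive (\<pi> m) u0 ur"
    and q: "strict_mono_on {..r} q" and qQ: "q ` {..r} = \<pi> (Suc m) \<inter> {u0..ur}"
    and q0: "q 0 = u0" and qr: "q r = ur"
  shows "{tr \<in> schauder_triples \<pi> m. fst tr = u0} = (\<lambda>l. (u0, q (l - 1), q l)) ` {2..r}"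
proof
  let ?Q = "\<pi> (Suc m) \<inter> {u0..ur}"
  have Q_index: "\<exists>j\<le>r. q j = x" if "x \<in> ?Q" for x using that qQ by force
  show "{tr \<in> schauder_triples \<pi> m. fst tr = u0} \<subseteq> (\<lambda>l. (u0, q (l - 1), q l)) ` {2..r}"
  proof
    fix tr assume tr: "tr \<in> {tr \<in> schauder_triples \<pi> m. fst tr = u0}"
    then obtain t2 t3 where tr_eq: "tr = (u0, t2, t3)" by (cases tr) auto
    from tr obtain ur' where ur': "consecutive (\<pi> m) u0 ur'" "u0 < t2" "t2 < ur'" "t2 \<in> \<pi> (Suc m)"
        "consecutive (\<pi> (Suc m)) t2 t3" "t3 \<le> ur'"
      unfolding tr_eq schauder_triples_def by auto
    have "ur' = ur" using consecutive_unique_right[OF ur'(1) U] .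
    then have "t2 \<in> ?Q" "t3 \<in> ?Q" using ur' unfolding consecutive_def by auto
    then obtain j j' where j: "j \<le> r" "q j = t2" and j': "j' \<le> r" "q j' = t3" using Q_index by blast
    have "consecutive ?Q (q j) (q j')"
      using consecutive_subset[OF ur'(5)] \<open>t2 \<in> ?Q\<close> \<open>t3 \<in> ?Q\<close> j j' by auto
    then have "j' = Suc j" using consecutive_enumeration_iff[OF q qQ j(1) j'(1)] by simp
    moreover have "j \<noteq> 0" using j q0 ur'(2) by (metis less_irrefl)
    ultimately show "tr \<in> (\<lambda>l. (u0, q (l - 1), q l)) ` {2..r}"
      unfolding tr_eq using j j' by (intro image_eqI[of _ _ "Suc j"]) auto
  qed
  show "(\<lambda>l. (u0, q (l - 1), q l)) ` {2..r} \<subseteq> {tr \<in> schauder_triples \<pi> m. fst tr = u0}"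
  proof
    fix tr assume "tr \<in> (\<lambda>l. (u0, q (l - 1), q l)) ` {2..r}"
    then obtain l where l: "l \<in> {2..r}" and tr_eq: "tr = (u0, q (l - 1), q l)" by blast
    have "consecutive ?Q (q (l - 1)) (q l)"
      using l consecutive_enumeration_iff[OF q qQ, of "l - 1" l] by auto
    then have c: "consecutive (\<pi> (Suc m)) (q (l - 1)) (q l)" by (rule consecutive_Int_interval)
    have "q 0 < q (l - 1)" "q (l - 1) < q r" "q l \<le> q r"
      using l strict_mono_on_less[OF q] strict_mono_on_less_eq[OF q] by auto
    then show "tr \<in> {tr \<in> schauder_triples \<pi> m. fst tr = u0}"
      unfolding tr_eq schauder_triples_def using U c q0 qr by (auto simp: consecutive_def)
  qed
qed

lemma refinement_enumeration:
  assumes fr: "finitely_refining \<pi>" and U: "consecutive (\<pi> m) u0 ur"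
  obtains q :: "nat \<Rightarrow> real" and r where "strict_mono_on {..r} q" "q ` {..r} = \<pi> (Suc m) \<inter> {u0..ur}"
    "q 0 = u0" "q r = ur" "1 \<le> r"
proof -
  define Q where "Q = \<pi> (Suc m) \<inter> {u0..ur}"
  have "u0 < ur" using U unfolding consecutive_def by simp
  have "u0 \<in> Q" "ur \<in> Q"
    using U finitely_refining_mono[OF fr, of m "Suc m"] unfolding Q_def consecutive_def by auto
  moreover have "finite Q" using finitely_refining_partition[OF fr] unfolding Q_def is_partition_def by auto
  ultimately obtain q :: "nat \<Rightarrow> real" and r where q: "strict_mono_on {..r} q" and qQ: "q ` {..r} = Q"
    using finite_strict_mono_enumeration[of Q] by blast
  have mono: "q 0 \<le> q j" "q j \<le> q r" if "j \<le> r" for j using that strict_mono_on_less_eq[OF q] by auto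
  have range: "u0 \<le> q j" "q j \<le> ur" if "j \<le> r" for j using that qQ unfolding Q_def by auto
  obtain j0 j1 where j0: "j0 \<le> r" "q j0 = u0" and j1: "j1 \<le> r" "q j1 = ur"
    using \<open>u0 \<in> Q\<close> \<open>ur \<in> Q\<close> qQ by (metis atMost_iff imageE)
  have q0: "q 0 = u0" using mono(1)[OF j0(1)] range(1)[of 0] j0(2) by simp
  have qr: "q r = ur" using mono(2)[OF j1(1)] range(2)[of r] j1(2) by simp
  have "1 \<le> r" using q0 qr \<open>u0 < ur\<close> by (cases r) auto
  then show ?thesis using that q qQ q0 qr unfolding Q_def by blast
qed

lemma knot_insertion_other_interval:
  assumes fr: "finitely_refining \<pi>" and U: "consecutive (\<pi> m) u0 ur" "u0 \<le> t" "t \<le> ur"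
    and tr: "(t1, t2, t3) \<in> schauder_triples \<pi> m" "t1 \<noteq> u0"
  shows "knot_insertion w t1 t2 t3 t = 0"
proof -
  obtain ur' where ur': "consecutive (\<pi> m) t1 ur'" "t3 \<le> ur'"
    using tr(1) unfolding schauder_triples_def by auto
  have "t \<notin> {t1<..<t3}"
  proof
    assume t: "t \<in> {t1<..<t3}"
    show False
    proof (cases "u0 < t \<and> t < ur")
      case True
      then show False using consecutive_eq_if_overlap[OF U(1) ur'(1), of t] tr(2) ur'(2) t by auto
    next
      case False
      then have "t \<in> \<pi> m" using U unfolding consecutive_def by auto
      then show False using schauder_tripleD(8)[OF fr tr(1)] t by auto
    qed
  qed
  then show ?thesis unfolding knot_insertion_def by auto
qed

(* Only the triples starting at the knot \<open>u0\<close> of \<open>\<pi> m\<close> below \<open>t\<close> contribute, and their sum telescopes. *)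
lemma level_sum:
  assumes fr: "finitely_refining \<pi>" and t: "0 \<le> t" "t \<le> 1"
  shows "(\<Sum>tr\<in>schauder_triples \<pi> m. eta W tr \<omega> * schauder_fun tr t)
       = pw_interp (\<lambda>s. W s \<omega>) (\<pi> (Suc m)) t - pw_interp (\<lambda>s. W s \<omega>) (\<pi> m) t"
proof -
  define w where "w = (\<lambda>s. W s \<omega>)"
  obtain u0 ur where U: "consecutive (\<pi> m) u0 ur" "u0 \<le> t" "t \<le> ur"
    using partition_interval_containing[OF finitely_refining_partition[OF fr] t] by blast
  obtain q :: "nat \<Rightarrow> real" and r where q: "strict_mono_on {..r} q"
    and qQ: "q ` {..r} = \<pi> (Suc m) \<inter> {u0..ur}" and q0: "q 0 = u0" and qr: "q r = ur" and r: "1 \<le> r"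
    by (rule refinement_enumeration[OF fr U(1)])
  have cons: "consecutive (\<pi> (Suc m)) (q j) (q (Suc j))" if "j < r" for j
    using consecutive_enumeration_iff[OF q qQ, of j "Suc j"] that by (auto intro: consecutive_Int_interval)
  define T0 where "T0 = {tr \<in> schauder_triples \<pi> m. fst tr = u0}"
  have "(\<Sum>tr\<in>schauder_triples \<pi> m. eta W tr \<omega> * schauder_fun tr t)
      = (\<Sum>tr\<in>schauder_triples \<pi> m. knot_insertion w (fst tr) (fst (snd tr)) (snd (snd tr)) t)"
    using eta_mult_schauder_fun[OF schauder_tripleD(1-3)[OF fr]] unfolding w_def
    by (intro sum.cong) auto
  also have "\<dots> = (\<Sum>tr\<in>T0. knot_insertion w (fst tr) (fst (snd tr)) (snd (snd tr)) t)"
    using knot_insertion_other_interval[OF fr U] unfolding T0_def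
    by (intro sum.mono_neutral_right[OF finite_schauder_triples[OF fr]]) auto
  also have "\<dots> = (\<Sum>l=2..r. knot_insertion w (q 0) (q (l - 1)) (q l) t)"
  proof -
    have "inj_on (\<lambda>l. (u0, q (l - 1), q l)) {2..r}"
      using strict_mono_on_eq[OF q] by (auto intro!: inj_onI)
    then show ?thesis
      unfolding T0_def schauder_triples_left_end[OF U(1) q qQ q0 qr] by (simp add: sum.reindex q0)
  qed
  also have "\<dots> = pw_interp w (\<pi> (Suc m)) t - lin_interp w u0 ur t"
    using knot_insertion_sum[OF q cons r order_refl] U q0 qr by simp
  also have "lin_interp w u0 ur t = pw_interp w (\<pi> m) t" using pw_interp_eq[OF U] by simp
  finally show ?thesis unfolding w_def .
qed

lemma lin_interp_approx:
  fixes w :: "real \<Rightarrow> real"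
  assumes ab: "a < b" "a \<le> t" "t \<le> b" and e: "\<bar>w a - w t\<bar> < e" "\<bar>w b - w t\<bar> < e"
  shows "\<bar>lin_interp w a b t - w t\<bar> < e"
proof -
  define l where "l = (t - a) / (b - a)"
  have l: "0 \<le> l" "l \<le> 1" using ab unfolding l_def by (auto simp: divide_simps)
  have "lin_interp w a b t = w a + (w b - w a) * l" unfolding lin_interp_def l_def by simp
  then have "lin_interp w a b t - w t = (1 - l) * (w a - w t) + l * (w b - w t)"
    by (simp add: algebra_simps)
  also have "\<bar>\<dots>\<bar> \<le> (1 - l) * \<bar>w a - w t\<bar> + l * \<bar>w b - w t\<bar>"
    using l abs_triangle_ineq[of "(1 - l) * (w a - w t)" "l * (w b - w t)"] by (simp add: abs_mult)
  also have "\<dots> < e"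
  proof (cases "l = 0")
    case False
    then have "(1 - l) * \<bar>w a - w t\<bar> \<le> (1 - l) * e" "l * \<bar>w b - w t\<bar> < l * e"
      using l e by (auto intro: mult_left_mono)
    then show ?thesis by (simp add: algebra_simps)
  qed (use e in simp)
  finally show ?thesis .
qed

lemma pw_interp_tendsto:
  assumes fr: "finitely_refining \<pi>" and w: "continuous_on {0..1} w" and t: "0 \<le> t" "t \<le> 1"
  shows "(\<lambda>n. pw_interp w (\<pi> n) t) \<longlonglongrightarrow> w t"
proof (rule LIMSEQ_I)
  fix e :: real assume "0 < e"
  obtain d where d: "0 < d" "\<And>x y. x \<in> {0..1} \<Longrightarrow> y \<in> {0..1} \<Longrightarrow> dist y x < d \<Longrightarrow> dist (w y) (w x) < e"
    using compact_uniformly_continuous[OF w] \<open>0 < e\<close> unfolding uniformly_continuous_on_def by fastforce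
  have "(\<lambda>n. mesh (\<pi> n)) \<longlonglongrightarrow> 0" using fr unfolding finitely_refining_def by simp
  then obtain N where N: "\<And>n. N \<le> n \<Longrightarrow> norm (mesh (\<pi> n) - 0) < d" using LIMSEQ_D[OF _ d(1)] by metis
  have "\<bar>pw_interp w (\<pi> n) t - w t\<bar> < e" if "N \<le> n" for n
  proof -
    have P: "is_partition (\<pi> n)" using finitely_refining_partition[OF fr] .
    obtain a b where ab: "consecutive (\<pi> n) a b" "a \<le> t" "t \<le> b"
      using partition_interval_containing[OF P t] by blast
    have ab01: "0 \<le> a" "a < b" "b \<le> 1" using partition_consecutive_bounds[OF P ab(1)] by auto
    have "b - a < d" using consecutive_le_mesh[OF P ab(1)] N[OF that] by simp
    then have "dist (w a) (w t) < e" "dist (w b) (w t) < e"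
      using d(2) ab ab01 t unfolding dist_real_def by auto
    then show ?thesis
      using lin_interp_approx[OF ab01(2) ab(2,3)] pw_interp_eq[OF ab] by (simp add: dist_real_def)
  qed
  then show "\<exists>N. \<forall>n\<ge>N. norm (pw_interp w (\<pi> n) t - w t) < e" by auto
qed

lemma schauder_expansion_sums:
  assumes fr: "finitely_refining \<pi>" and w: "continuous_on {0..1} (\<lambda>s. W s \<omega>)" and t: "0 \<le> t" "t \<le> 1"
  shows "(\<lambda>m. \<Sum>tr\<in>schauder_triples \<pi> m. eta W tr \<omega> * schauder_fun tr t)
           sums (W t \<omega> - W 0 \<omega> - (W 1 \<omega> - W 0 \<omega>) * t)"
proof -
  let ?L = "\<lambda>n. pw_interp (\<lambda>s. W s \<omega>) (\<pi> n) t"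
  have partial: "(\<Sum>m<n. \<Sum>tr\<in>schauder_triples \<pi> m. eta W tr \<omega> * schauder_fun tr t) = ?L n - ?L 0" for n
    unfolding level_sum[OF fr t] by (rule sum_lessThan_telescope)
  have "consecutive (\<pi> 0) 0 1" using fr unfolding finitely_refining_def consecutive_def by auto
  then have L0: "?L 0 = W 0 \<omega> + (W 1 \<omega> - W 0 \<omega>) * t"
    using pw_interp_eq[OF _ t] unfolding lin_interp_def by simp
  have "(\<lambda>n. ?L n - ?L 0) \<longlonglongrightarrow> W t \<omega> - ?L 0"
    by (intro tendsto_diff pw_interp_tendsto[OF fr w t] tendsto_const)
  then show ?thesis unfolding sums_def partial L0 by (simp add: algebra_simps)
qed

theorem mainTheorem9:
  fixes \<pi> :: "nat \<Rightarrow> real set" and M :: "'a measure" and W :: "real \<Rightarrow> 'a \<Rightarrow> real"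
  assumes "finitely_refining \<pi>"
    and "brownian_motion M W"
  shows "(AE \<omega> in M. \<forall>t\<in>{0..1}.
            (\<lambda>m. \<Sum>tr\<in>schauder_triples \<pi> m. eta W tr \<omega> * schauder_fun tr t)
              sums (W t \<omega> - W 0 \<omega> - (W 1 \<omega> - W 0 \<omega>) * t))
       \<and> prob_space.indep_vars M (\<lambda>_. borel) (\<lambda>(m, tr). eta W tr)
            (SIGMA m:UNIV. schauder_triples \<pi> m)
       \<and> (\<forall>i\<in>(SIGMA m:UNIV. schauder_triples \<pi> m).
            distributed M lborel ((\<lambda>(m, tr). eta W tr) i) std_normal_density)"
proof -
  interpret prob_space M using brownian_motion_prob_space[OF assms(2)] .
  have "AE \<omega> in M. continuous_on {0..1} (\<lambda>t. W t \<omega>)"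
    using assms(2) unfolding brownian_motion_def by simp
  then have expansion: "AE \<omega> in M. \<forall>t\<in>{0..1}.
      (\<lambda>m. \<Sum>tr\<in>schauder_triples \<pi> m. eta W tr \<omega> * schauder_fun tr t)
        sums (W t \<omega> - W 0 \<omega> - (W 1 \<omega> - W 0 \<omega>) * t)"
    by eventually_elim (auto intro: schauder_expansion_sums[OF assms(1)])
  have normal: "distributed M lborel ((\<lambda>(m, tr). eta W tr) i) std_normal_density"
    if i_in: "i \<in> (SIGMA m:UNIV. schauder_triples \<pi> m)" for i
  proof -
    obtain m t1 t2 t3 where i: "i = (m, (t1, t2, t3))" "(t1, t2, t3) \<in> schauder_triples \<pi> m"
      using i_in by (cases i) auto
    show ?thesis unfolding i(1) using eta_std_normal[OF assms(2) schauder_tripleD(1-4)[OF assms(1) i(2)]] by simp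
  qed
  show ?thesis using expansion eta_indep_vars[OF assms] normal by blast
qed

end
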